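(* Let $n\ge6$ be even and let $\varrho:G_n\to\mathcal L$ be a homomorphism. Then $\mathrm{Area}_i(p,q;\varrho)$ does not depend on the choice of $p,q\in\overline{\mathrm B}W$ nor on $i\in\{1,\dots,n\}$.
   Context: Let $W$ be a 2-dimensional complex vector space with a hermitian form $\langle\cdot,\cdot\rangle$ of signature $(+,-)$. In $\mathbb{CP}W$ let $\mathrm BW$ be the negative points (the Poincaré disc, curvature $-1$, oriented by its complex structure), $\mathrm SW$ the isotropic points, $\overline{\mathrm B}W=\mathrm BW\cup\mathrm SW$; $\mathcal L=\mathrm{PU}(W)$ is the group of orientation-preserving isometries of $\mathrm BW$. Oriented triangle area: $\mathrm{Area}\,\Delta(p_1,p_2,p_3)=2\arg(-\langle p_1,p_2\rangle\langle p_2,p_3\rangle\langle p_3,p_1\rangle)$ ($\arg\in[-\pi,\pi]$) if no two vertices are equal isotropic points, $0$ otherwise. $\mathrm{Area}(p_1,\dots,p_m):=\sum_{k=1}^m\mathrm{Area}\,\Delta(c,p_k,p_{k+1})$ (indices mod $m$), independent of $c\in\overline{\mathrm B}W$. $H_n$ is the group generated by $r_1,\dots,r_n$ with relations $r_i^2=1$, $r_n\cdots r_1=1$, indices mod $n$; for even $n$, $G_n\le H_n$ is the index-2 subgroup of words of even length in the $r_i$. $S$ is the automorphism of $H_n$ with $Sr_i=r_{i+1}$ (it preserves $G_n$). Put $v_i:=r_i\cdots r_2r_1$ for $0\le i\le n-1$ ($v_0=1$); for $0\le i\le n-2$ put $w_i:=v_i$ if $i$ is even and $w_i:=v_ir_n$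 if $i$ is odd, and $w_{i+n-1}:=r_nw_ir_n$; indices of the $w_i$ are mod $2n-2$; all $w_i\in G_n$. Write $w_ix$ for $\varrho(w_i)x$. Define $\mathrm{Area}_n(p,q;\varrho):=\mathrm{Area}(w_0p,w_1q,w_2p,w_3q,\dots,w_{2n-4}p,w_{2n-3}q)$ (the $2n-2$ points $w_jx_j$, $x_j=p$ for even $j$, $x_j=q$ for odd $j$), and for $1\le i\le n$, $\mathrm{Area}_i(p,q;\varrho):=\mathrm{Area}_n(p,q;\varrho\circ S^i)$. *)

theory Defs
  imports "HOL-Analysis.Analysis"
begin

text \<open>Model of W: the space complex^2 with a hermitian form given by a hermitian
  matrix H (linear in the first slot, conjugate-linear in the second).
  Signature (+,-) for a 2x2 hermitian matrix means det H < 0.\<close>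

definition herm :: "complex^2^2 \<Rightarrow> complex^2 \<Rightarrow> complex^2 \<Rightarrow> complex" where
  "herm H u v = (\<Sum>i\<in>UNIV. \<Sum>j\<in>UNIV. u$i * H$i$j * cnj (v$j))"

definition hermitian_sig11 :: "complex^2^2 \<Rightarrow> bool" where
  "hermitian_sig11 H \<longleftrightarrow> (\<forall>i j. H$i$j = cnj (H$j$i)) \<and> Re (det H) < 0"

text \<open>Points of CP W are represented by nonzero lifts; projective equality.\<close>
definition proj_eq :: "complex^2 \<Rightarrow> complex^2 \<Rightarrow> bool" where
  "proj_eq u v \<longleftrightarrow> (\<exists>c. c \<noteq> 0 \<and> u = c *s v)"

definition isotropic :: "complex^2^2 \<Rightarrow> complex^2 \<Rightarrow> bool" where
  "isotropic H v \<longleftrightarrow> v \<noteq> 0 \<and> herm H v v = 0"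

text \<open>closed disc: nonzero lifts of negative or isotropic points\<close>
definition cdisc :: "complex^2^2 \<Rightarrow> (complex^2) set" where
  "cdisc H = {v. v \<noteq> 0 \<and> Re (herm H v v) \<le> 0}"

definition eq_iso :: "complex^2^2 \<Rightarrow> complex^2 \<Rightarrow> complex^2 \<Rightarrow> bool" where
  "eq_iso H u v \<longleftrightarrow> isotropic H u \<and> isotropic H v \<and> proj_eq u v"

definition tri_area :: "complex^2^2 \<Rightarrow> complex^2 \<Rightarrow> complex^2 \<Rightarrow> complex^2 \<Rightarrow> real" where
  "tri_area H p1 p2 p3 =
     (if eq_iso H p1 p2 \<or> eq_iso H p2 p3 \<or> eq_iso H p3 p1 then 0
      else 2 * Arg (- (herm H p1 p2 * herm H p2 p3 * herm H p3 p1)))"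

definition poly_area_c :: "complex^2^2 \<Rightarrow> complex^2 \<Rightarrow> (complex^2) list \<Rightarrow> real" where
  "poly_area_c H c ps =
     (\<Sum>k<length ps. tri_area H c (ps ! k) (ps ! ((k + 1) mod length ps)))"

text \<open>Area(p_1,...,p_m), computed with an (arbitrary) base point c in the closed disc.\<close>
definition poly_area :: "complex^2^2 \<Rightarrow> (complex^2) list \<Rightarrow> real" where
  "poly_area H ps = poly_area_c H (SOME c. c \<in> cdisc H) ps"

text \<open>U(W): matrices preserving the hermitian form. PU(W) = U(W) modulo scalars.\<close>
definition unitary_H :: "complex^2^2 \<Rightarrow> complex^2^2 \<Rightarrow> bool" where
  "unitary_H H A \<longleftrightarrow> (\<forall>u v. herm H (A *v u) (A *v v) = herm H u v)"

definition mproj_eq :: "complex^2^2 \<Rightarrow> complex^2^2 \<Rightarrow> bool" where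
  "mproj_eq A B \<longleftrightarrow> (\<exists>c. c \<noteq> 0 \<and> A = (\<chi> i j. c * B$i$j))"

text \<open>Words in the generators r_1..r_n: lists over {1..n}; the list [a1,...,ak]
  stands for the product r_a1 r_a2 ... r_ak.  Equality in H_n is the congruence
  generated by r_i^2 = 1 and r_n ... r_1 = 1.\<close>
definition valid_word :: "nat \<Rightarrow> nat list \<Rightarrow> bool" where
  "valid_word n u \<longleftrightarrow> set u \<subseteq> {1..n}"

inductive hn_eq :: "nat \<Rightarrow> nat list \<Rightarrow> nat list \<Rightarrow> bool" for n where
  refl: "hn_eq n u u"
| sym: "hn_eq n u v \<Longrightarrow> hn_eq n v u"
| trans: "hn_eq n u v \<Longrightarrow> hn_eq n v w \<Longrightarrow> hn_eq n u w"
| sq: "i \<in> {1..n} \<Longrightarrow> hn_eq n (u @ [i, i] @ v) (u @ v)"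
| rel: "hn_eq n (u @ rev [1..<n+1] @ v) (u @ v)"

text \<open>A homomorphism G_n \<rightarrow> PU(W), given on (even-length) words by matrix lifts.\<close>
definition hom_Gn :: "nat \<Rightarrow> complex^2^2 \<Rightarrow> (nat list \<Rightarrow> complex^2^2) \<Rightarrow> bool" where
  "hom_Gn n H \<rho> \<longleftrightarrow>
     (\<forall>u. valid_word n u \<and> even (length u) \<longrightarrow> unitary_H H (\<rho> u)) \<and>
     mproj_eq (\<rho> []) (mat 1) \<and>
     (\<forall>u v. valid_word n u \<and> even (length u) \<and> valid_word n v \<and> even (length v) \<longrightarrow>
        mproj_eq (\<rho> (u @ v)) (\<rho> u ** \<rho> v)) \<and>
     (\<forall>u v. valid_word n u \<and> even (length u) \<and> valid_word n v \<and> even (length v) \<and> hn_eq n u v \<longrightarrow>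
        mproj_eq (\<rho> u) (\<rho> v))"

text \<open>The automorphism S: r_i \<mapsto> r_(i+1), indices mod n (in {1..n}).\<close>
definition shift :: "nat \<Rightarrow> nat \<Rightarrow> nat" where
  "shift n i = (if i = n then 1 else i + 1)"

definition vword :: "nat \<Rightarrow> nat list" where
  "vword i = rev [1..<i+1]"

definition wword :: "nat \<Rightarrow> nat \<Rightarrow> nat list" where
  "wword n j =
    (let w = (\<lambda>i. if even i then vword i else vword i @ [n]) in
     if j \<le> n - 2 then w j else [n] @ w (j - (n - 1)) @ [n])"

definition Area_n :: "nat \<Rightarrow> complex^2^2 \<Rightarrow> complex^2 \<Rightarrow> complex^2 \<Rightarrow> (nat list \<Rightarrow> complex^2^2) \<Rightarrow> real" where
  "Area_n n H p q \<rho> =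
     poly_area H (map (\<lambda>j. \<rho> (wword n j) *v (if even j then p else q)) [0..<2*n-2])"

definition Area_i :: "nat \<Rightarrow> nat \<Rightarrow> complex^2^2 \<Rightarrow> complex^2 \<Rightarrow> complex^2 \<Rightarrow> (nat list \<Rightarrow> complex^2^2) \<Rightarrow> real" where
  "Area_i n i H p q \<rho> = Area_n n H p q (\<lambda>u. \<rho> (map (shift n ^^ i) u))"

end

theory Submission
  imports Defs
begin

text \<open>The area of a triangle is twice the argument of the triple product
  \<open>-\<langle>a,b\<rangle>\<langle>b,c\<rangle>\<langle>c,a\<rangle>\<close>, which has nonnegative real part on the closed disc. Together
  with the fact that the alternating product of the four triple products of a quadrilateral is
  positive, this yields the cocycle identity, so polygon areas do not depend on the base point
  and change by explicit triangle terms when vertices are moved.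

  Changing one base point of \<open>Area_n\<close> moves every other vertex \<open>w_j x_j\<close>; the resulting
  triangle terms cancel in pairs, because \<open>w_(k+n) w_k\<inverse>\<close> carries the triangle at index \<open>k\<close>
  to the one at index \<open>k + n\<close>. Precomposing \<open>\<rho>\<close> with \<open>S\<close> turns the polygon with base points
  \<open>(f, f)\<close> into the one with base points \<open>(\<rho>(r\<^sub>1 r\<^sub>n) f, f)\<close> up to a telescoping sum, so
  \<open>Area_n\<close> is invariant under \<open>S\<close> and all \<open>Area_i\<close> coincide.\<close>

section \<open>Hermitian forms of signature (1,1)\<close>

text \<open>The form \<open>herm\<close> in coordinates, with the conjugated coordinates of the second
  argument as independent variables, so that identities between Hermitian products become
  ring identities.\<close>

definition herm_coord ::
    "complex \<Rightarrow> complex \<Rightarrow> complex \<Rightarrow> complex \<Rightarrow> complex \<Rightarrow> complex \<Rightarrow> complex \<Rightarrow> complex \<Rightarrow> complex" where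
  "herm_coord h11 h12 h21 h22 a1 a2 b1 b2 = a1*h11*b1 + a1*h12*b2 + a2*h21*b1 + a2*h22*b2"

lemma herm_coord_gram3:
  fixes h11 h12 h21 h22 :: complex
  defines "f \<equiv> herm_coord h11 h12 h21 h22"
  shows "f x1 x2 w1 w2 * (f y1 y2 s1 s2 * f z1 z2 u1 u2 - f y1 y2 u1 u2 * f z1 z2 s1 s2)
       - f x1 x2 s1 s2 * (f y1 y2 w1 w2 * f z1 z2 u1 u2 - f y1 y2 u1 u2 * f z1 z2 w1 w2)
       + f x1 x2 u1 u2 * (f y1 y2 w1 w2 * f z1 z2 s1 s2 - f y1 y2 s1 s2 * f z1 z2 w1 w2) = 0"
  unfolding f_def herm_coord_def by (simp add: algebra_simps)

lemma herm_coord_gram2: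
  fixes h11 h12 h21 h22 :: complex
  defines "f \<equiv> herm_coord h11 h12 h21 h22"
  shows "f x1 x2 w1 w2 * f y1 y2 s1 s2 - f x1 x2 s1 s2 * f y1 y2 w1 w2
       = (h11*h22 - h12*h21) * (x1 * y2 - x2 * y1) * (w1 * s2 - w2 * s1)"
  unfolding f_def herm_coord_def by (simp add: algebra_simps)

lemma herm_eq_herm_coord:
  "herm H u v = herm_coord (H$1$1) (H$1$2) (H$2$1) (H$2$2) (u$1) (u$2) (cnj (v$1)) (cnj (v$2))"
  by (simp add: herm_def herm_coord_def sum_2 algebra_simps)

lemma herm_expand:
  "herm H u v = u$1*H$1$1*cnj(v$1) + u$1*H$1$2*cnj(v$2) + u$2*H$2$1*cnj(v$1) + u$2*H$2$2*cnj(v$2)"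
  by (simp add: herm_eq_herm_coord herm_coord_def)

lemma herm_smult_left: "herm H (c *s u) v = c * herm H u v"
  by (simp add: herm_expand algebra_simps)

lemma herm_smult_right: "herm H u (c *s v) = cnj c * herm H u v"
  by (simp add: herm_expand algebra_simps)

lemma herm_zero_left [simp]: "herm H 0 v = 0"
  by (simp add: herm_expand)

text \<open>The Gram determinant of three vectors vanishes, as \<open>W\<close> has dimension 2.\<close>

lemma herm_gram3:
  "herm H x u * (herm H y v * herm H z w - herm H y w * herm H z v)
   - herm H x v * (herm H y u * herm H z w - herm H y w * herm H z u)
   + herm H x w * (herm H y u * herm H z v - herm H y v * herm H z u) = 0"
  unfolding herm_eq_herm_coord by (rule herm_coord_gram3)

context
  fixes H :: "complex^2^2"
  assumes H: "hermitian_sig11 H"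
begin

lemma hermitian_sig11_cnj_entries:
  "cnj (H$1$1) = H$1$1" "cnj (H$2$2) = H$2$2" "cnj (H$1$2) = H$2$1" "cnj (H$2$1) = H$1$2"
  using H unfolding hermitian_sig11_def by (metis complex_cnj_cnj)+

lemma herm_swap: "herm H v u = cnj (herm H u v)"
  using hermitian_sig11_cnj_entries by (simp add: herm_expand algebra_simps)

lemma herm_self_real: "herm H x x = complex_of_real (Re (herm H x x))"
proof -
  have "cnj (herm H x x) = herm H x x" using herm_swap[of x x] by simp
  then show ?thesis by (metis Reals_cnj_iff of_real_Re)
qed

lemma herm_mult_swap: "herm H x y * herm H y x = complex_of_real ((cmod (herm H x y))^2)"
  by (simp only: herm_swap[of y x] complex_norm_square)

lemma herm_eq_0_sym: "herm H y x = 0 \<Longrightarrow> herm H x y = 0"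
  using herm_swap[of x y] by simp

lemma det_hermitian_sig11_real:
  "H$1$1*H$2$2 - H$1$2*H$2$1 = complex_of_real (Re (det H))"
proof -
  have "cnj (H$1$1*H$2$2 - H$1$2*H$2$1) = H$1$1*H$2$2 - H$1$2*H$2$1"
    using hermitian_sig11_cnj_entries by (simp add: algebra_simps)
  then show ?thesis by (metis Reals_cnj_iff of_real_Re det_2)
qed

lemma herm_gram2:
  "Re (herm H x x) * Re (herm H y y) - (cmod (herm H x y))^2
     = Re (det H) * (cmod (x$1 * y$2 - x$2 * y$1))^2"
proof -
  define \<delta> where "\<delta> = x$1 * y$2 - x$2 * y$1"
  have g: "herm H x x * herm H y y - herm H x y * herm H y x
      = (H$1$1*H$2$2 - H$1$2*H$2$1) * \<delta> * cnj \<delta>"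
    unfolding herm_eq_herm_coord \<delta>_def using herm_coord_gram2 by simp
  have "complex_of_real (Re (herm H x x) * Re (herm H y y) - (cmod (herm H x y))^2)
       = complex_of_real (Re (det H) * (cmod \<delta>)^2)"
  proof -
    have "\<delta> * cnj \<delta> = complex_of_real ((cmod \<delta>)^2)"
      by (simp only: complex_norm_square)
    then show ?thesis
      using g unfolding herm_mult_swap[of x y] det_hermitian_sig11_real mult.assoc
      by (simp add: herm_self_real[symmetric])
  qed
  then show ?thesis unfolding \<delta>_def by (simp only: of_real_eq_iff)
qed

lemma herm_reverse_cauchy_schwarz:
  "Re (herm H x x) * Re (herm H y y) \<le> (cmod (herm H x y))^2"
proof -
  have "Re (det H) < 0" using H by (simp add: hermitian_sig11_def)
  then show ?thesis using herm_gram2[of x y] by (smt (verit) mult_nonpos_nonneg zero_le_power2)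
qed

end

lemma proj_eq_if_cross_eq_0:
  assumes "x \<noteq> 0" "y \<noteq> 0" "x$1 * y$2 - x$2 * y$1 = 0"
  shows "proj_eq x y"
proof (cases "y$1 = 0")
  case True
  then have y2: "y$2 \<noteq> 0" using assms(2) by (metis exhaust_2 vec_eq_iff zero_index)
  have "x$1 = 0" using assms(3) True y2 by simp
  then have "x = (x$2 / y$2) *s y" unfolding vec_eq_iff using True y2 by (simp add: forall_2)
  then show ?thesis using assms(1) unfolding proj_eq_def by (metis vector_smult_lzero)
next
  case False
  have "x$2 = x$1 / y$1 * y$2" using assms(3) False by (simp add: field_simps)
  then have "x = (x$1 / y$1) *s y" unfolding vec_eq_iff using False by (simp add: forall_2)
  then show ?thesis using assms(1) unfolding proj_eq_def by (metis vector_smult_lzero)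
qed

lemma eq_iso_imp_herm_eq_0: "eq_iso H x y \<Longrightarrow> herm H x y = 0"
  unfolding eq_iso_def proj_eq_def isotropic_def by (auto simp: herm_smult_left)

context
  fixes H :: "complex^2^2"
  assumes H: "hermitian_sig11 H"
begin

lemma herm_eq_0_imp_eq_iso:
  assumes x: "x \<in> cdisc H" and y: "y \<in> cdisc H" and z: "herm H x y = 0"
  shows "eq_iso H x y"
proof -
  have dn: "Re (det H) < 0" using H by (simp add: hermitian_sig11_def)
  have xx: "Re (herm H x x) \<le> 0" and yy: "Re (herm H y y) \<le> 0" and x0: "x \<noteq> 0" and y0: "y \<noteq> 0"
    using x y by (auto simp: cdisc_def)
  have g: "Re (herm H x x) * Re (herm H y y) = Re (det H) * (cmod (x$1 * y$2 - x$2 * y$1))^2"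
    using herm_gram2[OF H, of x y] z by simp
  moreover have "Re (herm H x x) * Re (herm H y y) \<ge> 0"
    using xx yy by (simp add: mult_nonpos_nonpos)
  moreover have "Re (det H) * (cmod (x$1 * y$2 - x$2 * y$1))^2 \<le> 0"
    using dn by (simp add: mult_nonpos_nonneg)
  ultimately have p0: "Re (herm H x x) * Re (herm H y y) = 0"
    and "x$1 * y$2 - x$2 * y$1 = 0" using dn by auto
  then obtain c where c: "c \<noteq> 0" "x = c *s y"
    using proj_eq_if_cross_eq_0 x0 y0 unfolding proj_eq_def by blast
  have "herm H x x = (c * cnj c) * herm H y y"
    using c by (simp add: herm_smult_left herm_smult_right)
  also have "c * cnj c = complex_of_real ((cmod c)^2)" by (simp only: complex_norm_square)
  finally have "Re (herm H x x) = (cmod c)^2 * Re (herm H y y)" by simp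
  then have "Re (herm H x x) = 0" "Re (herm H y y) = 0" using p0 c(1) by auto
  then have "herm H x x = 0" "herm H y y = 0" using herm_self_real[OF H] by (metis of_real_0)+
  then show ?thesis using x0 y0 c unfolding eq_iso_def isotropic_def proj_eq_def by blast
qed

lemma herm_eq_0_imp_smult:
  assumes "x \<in> cdisc H" "y \<in> cdisc H" "herm H x y = 0"
  obtains k where "k \<noteq> 0" "y = k *s x"
proof -
  obtain c where c: "c \<noteq> 0" "x = c *s y"
    using herm_eq_0_imp_eq_iso[OF assms] unfolding eq_iso_def proj_eq_def by blast
  then have "y = (1/c) *s x" by (simp add: vector_smult_assoc)
  then show ?thesis using c by (intro that[of "1/c"]) simp_all
qed

lemma herm_nondegenerate:
  assumes "\<forall>y. herm H x y = 0"
  shows "x = 0"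
proof -
  have dn: "Re (det H) < 0" using H by (simp add: hermitian_sig11_def)
  have "x$1 * y$2 - x$2 * y$1 = 0" for y :: "complex^2"
    using herm_gram2[OF H, of x y] assms dn by simp
  from this[of "vector [1, 0]"] this[of "vector [0, 1]"] show ?thesis
    by (simp add: vec_eq_iff forall_2)
qed

lemma unitary_cdisc:
  assumes A: "unitary_H H A" and x: "x \<in> cdisc H"
  shows "A *v x \<in> cdisc H"
proof -
  have "A *v x \<noteq> 0"
  proof
    assume "A *v x = 0"
    then have "\<forall>y. herm H x y = 0" using A by (metis herm_zero_left unitary_H_def)
    then show False using herm_nondegenerate x by (simp add: cdisc_def)
  qed
  then show ?thesis using x A by (simp add: cdisc_def unitary_H_def)
qed

end

section \<open>Oriented triangle areas\<close>

definition herm_triple :: "complex^2^2 \<Rightarrow> complex^2 \<Rightarrow> complex^2 \<Rightarrow> complex^2 \<Rightarrow> complex" where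
  "herm_triple H a b c = - (herm H a b * herm H b c * herm H c a)"

text \<open>The oriented area of a triangle, without the special case of the definition of
  \<open>tri_area\<close>; the two agree because the triple product vanishes in that case.\<close>

definition area_arg :: "complex^2^2 \<Rightarrow> complex^2 \<Rightarrow> complex^2 \<Rightarrow> complex^2 \<Rightarrow> real" where
  "area_arg H a b c = 2 * Arg (herm_triple H a b c)"

lemma herm_triple_cycle: "herm_triple H a b c = herm_triple H b c a"
  by (simp add: herm_triple_def algebra_simps)

lemma herm_triple_smult_left:
  "herm_triple H (k *s a) b c = complex_of_real ((cmod k)^2) * herm_triple H a b c"
  by (simp add: herm_triple_def herm_smult_left herm_smult_right complex_norm_square[symmetric]
      algebra_simps)

lemma area_arg_cycle: "area_arg H a b c = area_arg H b c a"
  by (simp add: area_arg_def herm_triple_cycle[of H a b c])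

lemma area_arg_smult_left:
  assumes "k \<noteq> 0"
  shows "area_arg H (k *s a) b c = area_arg H a b c"
proof -
  have "(cmod k)^2 > 0" using assms by simp
  then show ?thesis unfolding area_arg_def herm_triple_smult_left by (simp only: Arg_times_of_real)
qed

lemma area_arg_smult_mid: "k \<noteq> 0 \<Longrightarrow> area_arg H a (k *s b) c = area_arg H a b c"
  by (metis area_arg_cycle area_arg_smult_left)

lemma area_arg_smult_right: "k \<noteq> 0 \<Longrightarrow> area_arg H a b (k *s c) = area_arg H a b c"
  by (metis area_arg_cycle area_arg_smult_left)

lemma area_arg_proj_eq:
  "proj_eq a a' \<Longrightarrow> proj_eq b b' \<Longrightarrow> proj_eq c c' \<Longrightarrow> area_arg H a b c = area_arg H a' b' c'"
  unfolding proj_eq_def by (auto simp: area_arg_smult_left area_arg_smult_mid area_arg_smult_right)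

lemma area_arg_unitary:
  "unitary_H H A \<Longrightarrow> area_arg H (A *v a) (A *v b) (A *v c) = area_arg H a b c"
  by (simp add: area_arg_def herm_triple_def unitary_H_def)

text \<open>The hypothesis is the vanishing of the determinant of the Hermitian matrix
  \<open>[[A, X, cnj Z], [cnj X, B, Y], [Z, cnj Y, C]]\<close>.\<close>

lemma two_Re_triple_product:
  fixes X Y Z :: complex and A B C :: real
  assumes "complex_of_real A * (complex_of_real B * complex_of_real C - Y * cnj Y)
    - X * (cnj X * complex_of_real C - Y * Z) + cnj Z * (cnj X * cnj Y - complex_of_real B * Z) = 0"
  shows "2 * Re (X*Y*Z) = A * (cmod Y)^2 + B * (cmod Z)^2 + C * (cmod X)^2 - A*B*C"
proof -
  have "Re (complex_of_real A * (complex_of_real B * complex_of_real C - Y * cnj Y)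
    - X * (cnj X * complex_of_real C - Y * Z)
    + cnj Z * (cnj X * cnj Y - complex_of_real B * Z)) = 0"
    using assms by simp
  then show ?thesis unfolding cmod_power2 by (simp add: power2_eq_square algebra_simps)
qed

context
  fixes H :: "complex^2^2"
  assumes H: "hermitian_sig11 H"
begin

lemma tri_area_eq_area_arg: "tri_area H a b c = area_arg H a b c"
proof (cases "eq_iso H a b \<or> eq_iso H b c \<or> eq_iso H c a")
  case True
  then have "herm_triple H a b c = 0"
    unfolding herm_triple_def using eq_iso_imp_herm_eq_0 by fastforce
  then show ?thesis using True by (simp add: tri_area_def area_arg_def Arg_zero)
next
  case False
  then show ?thesis by (simp add: tri_area_def area_arg_def herm_triple_def)
qed

lemma herm_triple_swap: "herm_triple H a c b = cnj (herm_triple H a b c)"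
  by (simp add: herm_triple_def herm_swap[OF H, of a c] herm_swap[OF H, of c b]
      herm_swap[OF H, of b a])

lemma herm_triple_eq_0_iff:
  "herm_triple H x y z = 0 \<longleftrightarrow> herm H x y = 0 \<or> herm H y z = 0 \<or> herm H x z = 0"
proof -
  have "herm_triple H x y z = 0 \<longleftrightarrow> herm H x y = 0 \<or> herm H y z = 0 \<or> herm H z x = 0"
    by (simp add: herm_triple_def)
  then show ?thesis using herm_eq_0_sym[OF H, of x z] herm_eq_0_sym[OF H, of z x] by blast
qed

lemma two_Re_herm_triple:
  "2 * Re (herm_triple H a b c) = - Re (herm H a a) * (cmod (herm H b c))^2
     - Re (herm H b b) * (cmod (herm H c a))^2 - Re (herm H c c) * (cmod (herm H a b))^2
     + Re (herm H a a) * Re (herm H b b) * Re (herm H c c)"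
proof -
  have g: "complex_of_real (Re (herm H a a)) * (complex_of_real (Re (herm H b b))
        * complex_of_real (Re (herm H c c)) - herm H b c * cnj (herm H b c))
     - herm H a b * (cnj (herm H a b) * complex_of_real (Re (herm H c c)) - herm H b c * herm H c a)
     + cnj (herm H c a) * (cnj (herm H a b) * cnj (herm H b c)
        - complex_of_real (Re (herm H b b)) * herm H c a) = 0"
    using herm_gram3[of H a a b b c c]
    by (simp only: herm_self_real[OF H, symmetric] herm_swap[OF H, of b a] herm_swap[OF H, of c b]
        herm_swap[OF H, of a c])
  show ?thesis using two_Re_triple_product[OF g] unfolding herm_triple_def by simp
qed

lemma herm_triple_Re_sign:
  assumes "a \<in> cdisc H" "b \<in> cdisc H" "c \<in> cdisc H"
  shows "Re (herm_triple H a b c) \<ge> 0"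
    and "herm_triple H a b c \<noteq> 0 \<Longrightarrow> Re (herm_triple H a b c) = 0 \<Longrightarrow>
           herm H a a = 0 \<and> herm H b b = 0 \<and> herm H c c = 0"
proof -
  define A B C where "A = Re (herm H a a)" and "B = Re (herm H b b)" and "C = Re (herm H c c)"
  define X Y Z where "X = (cmod (herm H a b))^2" and "Y = (cmod (herm H b c))^2"
    and "Z = (cmod (herm H c a))^2"
  have A: "A \<le> 0" and B: "B \<le> 0" and C: "C \<le> 0"
    using assms by (auto simp: cdisc_def A_def B_def C_def)
  have "B * C \<le> Y" unfolding B_def C_def Y_def by (rule herm_reverse_cauchy_schwarz[OF H])
  then have t1: "(-A) * (Y - B * C) \<ge> 0" using A by (simp add: mult_nonpos_nonneg)
  have t2: "(-B) * Z \<ge> 0" and t3: "(-C) * X \<ge> 0"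
    using B C by (simp_all add: X_def Z_def mult_nonpos_nonneg)
  have e: "2 * Re (herm_triple H a b c) = (-A) * (Y - B * C) + (-B) * Z + (-C) * X"
    using two_Re_herm_triple[of a b c] unfolding A_def B_def C_def X_def Y_def Z_def
    by (simp add: algebra_simps)
  show "Re (herm_triple H a b c) \<ge> 0" using e t1 t2 t3 by linarith
  assume nz: "herm_triple H a b c \<noteq> 0" and r0: "Re (herm_triple H a b c) = 0"
  have "herm H a b \<noteq> 0" "herm H b c \<noteq> 0" "herm H c a \<noteq> 0"
    using nz by (auto simp: herm_triple_def)
  then have X: "X > 0" and Y: "Y > 0" and Z: "Z > 0" by (simp_all add: X_def Y_def Z_def)
  have "(-A) * (Y - B * C) = 0" "(-B) * Z = 0" "(-C) * X = 0" using e t1 t2 t3 r0 by linarith+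
  then have "B = 0" "C = 0" "A * Y = 0" using X Z by auto
  then have "A = 0" "B = 0" "C = 0" using Y by simp_all
  then show "herm H a a = 0 \<and> herm H b b = 0 \<and> herm H c c = 0"
    unfolding A_def B_def C_def by (metis herm_self_real[OF H] of_real_0)
qed

lemmas herm_triple_Re_nonneg = herm_triple_Re_sign(1)
lemmas herm_triple_Re_eq_0_imp_isotropic = herm_triple_Re_sign(2)

lemma area_arg_swap:
  assumes "a \<in> cdisc H" "b \<in> cdisc H" "c \<in> cdisc H"
  shows "area_arg H a c b = - area_arg H a b c"
proof (cases "herm_triple H a b c \<in> \<real>")
  case True
  then have z: "Arg (herm_triple H a b c) = 0"
    using herm_triple_Re_nonneg[OF assms] Arg_eq_0 by blast
  then have "Arg (herm_triple H a c b) = 0"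
    unfolding herm_triple_swap[of a c b] Arg_cnj using True by simp
  then show ?thesis using z by (simp add: area_arg_def)
next
  case False
  then show ?thesis by (simp add: area_arg_def herm_triple_swap[of a c b] Arg_cnj)
qed

lemma area_arg_repeat_left:
  assumes "a \<in> cdisc H"
  shows "area_arg H a a b = 0"
proof -
  have "herm_triple H a a b = - (herm H a a * (herm H a b * herm H b a))"
    by (simp add: herm_triple_def algebra_simps)
  also have "\<dots> = complex_of_real (- (Re (herm H a a) * (cmod (herm H a b))^2))"
    by (subst herm_self_real[OF H, of a])
      (simp only: herm_mult_swap[OF H] of_real_mult of_real_minus)
  finally have e:
    "herm_triple H a a b = complex_of_real (- (Re (herm H a a) * (cmod (herm H a b))^2))" .
  have "Re (herm H a a) * (cmod (herm H a b))^2 \<le> 0"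
    using assms by (simp add: cdisc_def mult_nonpos_nonneg)
  then show ?thesis unfolding area_arg_def e Arg_of_real by simp
qed

lemma area_arg_repeat_outer: "a \<in> cdisc H \<Longrightarrow> area_arg H a b a = 0"
  by (metis area_arg_repeat_left area_arg_cycle)

lemma area_arg_repeat_right: "a \<in> cdisc H \<Longrightarrow> area_arg H b a a = 0"
  by (metis area_arg_repeat_left area_arg_cycle)

end

section \<open>The cocycle identity\<close>

lemma Arg_alternating_sum_cases:
  fixes T1 T2 T3 T4 :: complex
  assumes nz: "T1 \<noteq> 0" "T2 \<noteq> 0" "T3 \<noteq> 0" "T4 \<noteq> 0"
    and re: "0 \<le> Re T1" "0 \<le> Re T2" "0 \<le> Re T3" "0 \<le> Re T4"
    and pos: "sgn (T1 * cnj T2 * T3 * cnj T4) = 1"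
  obtains "Arg T1 - Arg T2 + Arg T3 - Arg T4 = 0"
  | s :: real where "s = 1 \<or> s = -1"
      "Arg T2 = - s * (pi/2)" "Arg T3 = s * (pi/2)" "Arg T4 = - s * (pi/2)"
proof -
  define x where "x = Arg T1 - Arg T2 + Arg T3 - Arg T4"
  have bnd: "\<bar>Arg T1\<bar> \<le> pi/2" "\<bar>Arg T2\<bar> \<le> pi/2" "\<bar>Arg T3\<bar> \<le> pi/2" "\<bar>Arg T4\<bar> \<le> pi/2"
    using re by (simp_all only: Arg_Re_nonneg)
  have "cis x = cis (Arg T1) * cnj (cis (Arg T2)) * cis (Arg T3) * cnj (cis (Arg T4))"
    unfolding x_def cis_cnj cis_mult by (simp add: algebra_simps)
  also have "\<dots> = sgn (T1 * cnj T2 * T3 * cnj T4)"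
    using nz by (simp add: cis_Arg sgn_mult sgn_div_norm[of "cnj _"] sgn_div_norm[of T2]
        sgn_div_norm[of T4])
  finally have "exp (\<i> * complex_of_real x) = 1" using pos by (simp add: cis_conv_exp)
  then obtain k :: int where k: "x = of_int (2 * k) * pi" unfolding exp_eq_1 by auto
  have "\<bar>of_int (2 * k) * pi\<bar> \<le> 2 * pi" using bnd unfolding k[symmetric] x_def by linarith
  then have "\<bar>of_int k\<bar> * (2 * pi) \<le> 1 * (2 * pi)" by (simp add: abs_mult)
  then have "\<bar>k\<bar> \<le> 1" using pi_gt_zero by (simp only: mult_le_cancel_right) linarith
  then consider "k = 0" | "k = 1" | "k = -1" by linarith
  then show ?thesis
  proof cases
    case 1
    then show ?thesis using that(1) k unfolding x_def by simp
  next
    case 2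
    then have "x = 2 * pi" using k by simp
    then show ?thesis using bnd unfolding x_def by (intro that(2)[of 1]) linarith+
  next
    case 3
    then have "x = - 2 * pi" using k by simp
    then show ?thesis using bnd unfolding x_def by (intro that(2)[of "-1"]) linarith+
  qed
qed

lemma Arg_eq_half_pi_imp:
  assumes "s = 1 \<or> s = -1" "Arg z = s * (pi/2)"
  shows "z = complex_of_real (s * cmod z) * \<i>"
proof -
  have "cis (s * (pi/2)) = complex_of_real s * \<i>" using assms(1) by (auto simp: complex_eq_iff)
  then show ?thesis
    by (metis assms(2) rcis_cmod_Arg rcis_def of_real_mult mult.commute mult.left_commute)
qed

context
  fixes H :: "complex^2^2"
  assumes H: "hermitian_sig11 H"
begin

lemma area_arg_cocycle_degenerate:
  assumes a: "a \<in> cdisc H" and b: "b \<in> cdisc H" and c: "c \<in> cdisc H" and d: "d \<in> cdisc H"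
    and z: "herm H a b = 0 \<or> herm H a c = 0 \<or> herm H a d = 0 \<or> herm H b c = 0 \<or> herm H b d = 0
      \<or> herm H c d = 0"
  shows "area_arg H b c d - area_arg H a c d + area_arg H a b d - area_arg H a b c = 0"
proof -
  note repeat = area_arg_repeat_left[OF H] area_arg_repeat_outer[OF H] area_arg_repeat_right[OF H]
  note smult = area_arg_smult_left area_arg_smult_mid area_arg_smult_right
  consider "herm H a b = 0" | "herm H a c = 0" | "herm H a d = 0" | "herm H b c = 0"
    | "herm H b d = 0" | "herm H c d = 0"
    using z by blast
  then show ?thesis
  proof cases
    case 1
    obtain k where "k \<noteq> 0" "b = k *s a" by (rule herm_eq_0_imp_smult[OF H a b 1])
    then show ?thesis using a by (simp add: smult repeat)
  next
    case 2
    obtain k where "k \<noteq> 0" "c = k *s a" by (rule herm_eq_0_imp_smult[OF H a c 2])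
    moreover have "area_arg H b a d = - area_arg H a b d"
      using area_arg_swap[OF H a b d] area_arg_cycle[of H b a d] by simp
    ultimately show ?thesis using a by (simp add: smult repeat)
  next
    case 3
    obtain k where "k \<noteq> 0" "d = k *s a" by (rule herm_eq_0_imp_smult[OF H a d 3])
    moreover have "area_arg H b c a = area_arg H a b c" using area_arg_cycle[of H a b c] by simp
    ultimately show ?thesis using a by (simp add: smult repeat)
  next
    case 4
    obtain k where "k \<noteq> 0" "c = k *s b" by (rule herm_eq_0_imp_smult[OF H b c 4])
    then show ?thesis using b by (simp add: smult repeat)
  next
    case 5
    obtain k where "k \<noteq> 0" "d = k *s b" by (rule herm_eq_0_imp_smult[OF H b d 5])
    moreover have "area_arg H a c b = - area_arg H a b c" by (rule area_arg_swap[OF H a b c])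
    ultimately show ?thesis using b by (simp add: smult repeat)
  next
    case 6
    obtain k where "k \<noteq> 0" "d = k *s c" by (rule herm_eq_0_imp_smult[OF H c d 6])
    then show ?thesis using c by (simp add: smult repeat)
  qed
qed

lemma herm_triple_alternating_product:
  "herm_triple H b c d * cnj (herm_triple H a c d) * herm_triple H a b d * cnj (herm_triple H a b c)
   = complex_of_real ((cmod (herm H b c) * cmod (herm H c d) * cmod (herm H d b)
       * cmod (herm H a d) * cmod (herm H c a) * cmod (herm H a b))^2)"
proof -
  have "herm_triple H b c d * cnj (herm_triple H a c d) * herm_triple H a b d
        * cnj (herm_triple H a b c)
      = herm_triple H b c d * herm_triple H a d c * herm_triple H a b d * herm_triple H a c b"
    by (simp add: herm_triple_swap[OF H, of a d c] herm_triple_swap[OF H, of a c b])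
  also have "\<dots> = (herm H b c * herm H c b) * (herm H c d * herm H d c) * (herm H d b * herm H b d)
      * (herm H a d * herm H d a) * (herm H c a * herm H a c) * (herm H a b * herm H b a)"
    by (simp add: herm_triple_def algebra_simps)
  finally show ?thesis by (simp only: herm_mult_swap[OF H] of_real_mult power_mult_distrib)
qed

text \<open>If two vertices are isotropic, the triple products of a quadrilateral satisfy a polynomial
  identity whose two sides have opposite signs when the arguments alternate between
  \<open>\<plusminus>\<pi>/2\<close>.\<close>

lemma herm_triple_isotropic_identity:
  assumes aa: "herm H a a = 0" and bb: "herm H b b = 0"
  shows "(herm H a b * herm H b a) * (herm H c d * herm H d c) * (herm H a d * herm H d a)
           * (herm H a c * herm H c a)
       = herm_triple H a d c * (herm_triple H a b d * (herm H a c * herm H c a)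
           + herm_triple H a c b * (herm H a d * herm H d a))"
proof -
  have R: "- herm H a b * (herm H b a * herm H c d - herm H b d * herm H c a)
      + herm H a d * (herm H b a * herm H c b) = 0"
    using herm_gram3[of H a a b b c d] aa bb by simp
  have "(herm H a b * herm H b a) * (herm H c d * herm H d c) * (herm H a d * herm H d a)
        * (herm H a c * herm H c a)
       - herm_triple H a d c * (herm_triple H a b d * (herm H a c * herm H c a)
           + herm_triple H a c b * (herm H a d * herm H d a))
       = - (- herm H a b * (herm H b a * herm H c d - herm H b d * herm H c a)
           + herm H a d * (herm H b a * herm H c b))
         * (herm H d c * herm H a d * herm H d a * herm H a c * herm H c a)"
    by (simp add: herm_triple_def algebra_simps)
  then show ?thesis using R by simp
qed

lemma isotropic_herm_triples_not_alternating:
  assumes aa: "herm H a a = 0" and bb: "herm H b b = 0" and s: "s = 1 \<or> s = -1"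
    and t2: "herm_triple H a c d = complex_of_real (- s * t2) * \<i>"
    and t3: "herm_triple H a b d = complex_of_real (s * t3) * \<i>"
    and t4: "herm_triple H a b c = complex_of_real (- s * t4) * \<i>"
    and pos: "t2 > 0" "t3 > 0" "t4 > 0" and ac: "herm H a c \<noteq> 0"
  shows False
proof -
  have e2: "herm_triple H a d c = complex_of_real (s * t2) * \<i>"
    unfolding herm_triple_swap[OF H, of a d c] t2 by simp
  have e4: "herm_triple H a c b = complex_of_real (s * t4) * \<i>"
    unfolding herm_triple_swap[OF H, of a c b] t4 by simp
  have "herm_triple H a d c * (herm_triple H a b d * (herm H a c * herm H c a)
        + herm_triple H a c b * (herm H a d * herm H d a))
      = complex_of_real (s * s) * (\<i> * \<i>)
        * complex_of_real (t2 * (t3 * (cmod (herm H a c))^2 + t4 * (cmod (herm H a d))^2))"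
    unfolding e2 e4 t3 herm_mult_swap[OF H] by (simp add: algebra_simps)
  also have "s * s = 1" using s by auto
  finally have "herm_triple H a d c * (herm_triple H a b d * (herm H a c * herm H c a)
        + herm_triple H a c b * (herm H a d * herm H d a))
      = complex_of_real (- (t2 * (t3 * (cmod (herm H a c))^2 + t4 * (cmod (herm H a d))^2)))"
    by simp
  moreover have "(herm H a b * herm H b a) * (herm H c d * herm H d c) * (herm H a d * herm H d a)
      * (herm H a c * herm H c a)
      = complex_of_real ((cmod (herm H a b))^2 * (cmod (herm H c d))^2 * (cmod (herm H a d))^2
          * (cmod (herm H a c))^2)"
    by (simp only: herm_mult_swap[OF H] of_real_mult)
  ultimately have "(cmod (herm H a b))^2 * (cmod (herm H c d))^2 * (cmod (herm H a d))^2
        * (cmod (herm H a c))^2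
      = - (t2 * (t3 * (cmod (herm H a c))^2 + t4 * (cmod (herm H a d))^2))"
    using herm_triple_isotropic_identity[OF aa bb, of c d] by (simp only: of_real_eq_iff)
  moreover have "t2 * (t3 * (cmod (herm H a c))^2 + t4 * (cmod (herm H a d))^2) > 0"
    using pos ac by (simp add: add_pos_nonneg)
  moreover have "(cmod (herm H a b))^2 * (cmod (herm H c d))^2 * (cmod (herm H a d))^2
      * (cmod (herm H a c))^2 \<ge> 0" by simp
  ultimately show False by linarith
qed

text \<open>Modulo \<open>4\<pi>\<close> this is the multiplicativity of the argument; the sign of the real
  parts of the triple products rules out the remaining multiples of \<open>2\<pi>\<close>.\<close>

lemma area_arg_cocycle:
  assumes a: "a \<in> cdisc H" and b: "b \<in> cdisc H" and c: "c \<in> cdisc H" and d: "d \<in> cdisc H"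
  shows "area_arg H b c d - area_arg H a c d + area_arg H a b d - area_arg H a b c = 0"
proof (cases "herm_triple H b c d = 0 \<or> herm_triple H a c d = 0 \<or> herm_triple H a b d = 0
    \<or> herm_triple H a b c = 0")
  case True
  then show ?thesis
    by (intro area_arg_cocycle_degenerate[OF a b c d])
      (auto simp: herm_triple_eq_0_iff[OF H] dest: herm_eq_0_sym[OF H])
next
  case False
  define T1 T2 T3 T4 where "T1 = herm_triple H b c d" and "T2 = herm_triple H a c d"
    and "T3 = herm_triple H a b d" and "T4 = herm_triple H a b c"
  have nz: "T1 \<noteq> 0" "T2 \<noteq> 0" "T3 \<noteq> 0" "T4 \<noteq> 0"
    using False by (simp_all add: T1_def T2_def T3_def T4_def)
  have re: "0 \<le> Re T1" "0 \<le> Re T2" "0 \<le> Re T3" "0 \<le> Re T4"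
    unfolding T1_def T2_def T3_def T4_def
      using a b c d by (simp_all add: herm_triple_Re_nonneg[OF H])
  have "T1 * cnj T2 * T3 * cnj T4 \<noteq> 0" using nz by simp
  then have "sgn (T1 * cnj T2 * T3 * cnj T4) = 1"
    unfolding T1_def T2_def T3_def T4_def herm_triple_alternating_product sgn_of_real
    by (simp add: zero_less_mult_iff)
  then consider "Arg T1 - Arg T2 + Arg T3 - Arg T4 = 0"
    | s :: real where "s = 1 \<or> s = -1"
      "Arg T2 = - s * (pi/2)" "Arg T3 = s * (pi/2)" "Arg T4 = - s * (pi/2)"
    by (rule Arg_alternating_sum_cases[OF nz re])
  then show ?thesis
  proof cases
    case 1
    then show ?thesis by (simp add: area_arg_def T1_def T2_def T3_def T4_def)
  next
    case (2 s)
    have ms: "- s = 1 \<or> - s = -1" using 2(1) by auto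
    have r2: "T2 = complex_of_real (- s * cmod T2) * \<i>" by (rule Arg_eq_half_pi_imp[OF ms 2(2)])
    have r3: "T3 = complex_of_real (s * cmod T3) * \<i>" by (rule Arg_eq_half_pi_imp[OF 2(1,3)])
    have r4: "T4 = complex_of_real (- s * cmod T4) * \<i>" by (rule Arg_eq_half_pi_imp[OF ms 2(4)])
    have "Re T4 = 0" by (subst r4) simp
    then have iso: "herm H a a = 0" "herm H b b = 0"
      using herm_triple_Re_eq_0_imp_isotropic[OF H a b c] nz(4) unfolding T4_def by blast+
    have "herm H a c \<noteq> 0" using nz(4) by (simp add: T4_def herm_triple_eq_0_iff[OF H])
    then have False
      using isotropic_herm_triples_not_alternating[OF iso 2(1)
          r2[unfolded T2_def] r3[unfolded T3_def] r4[unfolded T4_def]] nz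
      by (simp add: T2_def T3_def T4_def)
    then show ?thesis ..
  qed
qed

end

section \<open>Polygon areas\<close>

definition polygon_area :: "complex^2^2 \<Rightarrow> complex^2 \<Rightarrow> (nat \<Rightarrow> complex^2) \<Rightarrow> nat \<Rightarrow> real" where
  "polygon_area H c X N = (\<Sum>k<N. area_arg H c (X k) (X ((k+1) mod N)))"

lemma sum_lessThan_rotate1:
  fixes f :: "nat \<Rightarrow> 'a::comm_monoid_add"
  assumes "N > 0"
  shows "(\<Sum>k<N. f ((k+1) mod N)) = (\<Sum>k<N. f k)"
proof -
  obtain M where M: "N = Suc M" using assms gr0_implies_Suc by blast
  have "(\<Sum>k<Suc M. f ((k+1) mod Suc M)) = (\<Sum>k<M. f ((k+1) mod Suc M)) + f ((M+1) mod Suc M)"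
    by simp
  also have "(\<Sum>k<M. f ((k+1) mod Suc M)) = (\<Sum>k<M. f (Suc k))"
    by (rule sum.cong) auto
  also have "f ((M+1) mod Suc M) = f 0" by simp
  also have "(\<Sum>k<M. f (Suc k)) + f 0 = (\<Sum>k<Suc M. f k)"
    by (subst sum.lessThan_Suc_shift) (rule add.commute)
  finally show ?thesis using M by simp
qed

lemma sum_lessThan_rotate:
  fixes f :: "nat \<Rightarrow> 'a::comm_monoid_add"
  assumes "N > 0"
  shows "(\<Sum>k<N. f ((k + s) mod N)) = (\<Sum>k<N. f k)"
proof (induction s)
  case 0
  show ?case by (rule sum.cong) auto
next
  case (Suc s)
  have "(\<Sum>k<N. f ((k + Suc s) mod N)) = (\<Sum>k<N. (\<lambda>t. f ((t + s) mod N)) ((k+1) mod N))"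
    by (rule sum.cong) (simp_all add: mod_add_left_eq)
  also have "\<dots> = (\<Sum>k<N. f ((k + s) mod N))" by (rule sum_lessThan_rotate1[OF assms])
  finally show ?case using Suc by simp
qed

lemma sum_lessThan_telescope_mod:
  fixes f :: "nat \<Rightarrow> 'a::ab_group_add"
  assumes "N > 0"
  shows "(\<Sum>k<N. f ((k+1) mod N) - f k) = 0"
  using sum_lessThan_rotate1[OF assms, of f] by (simp add: sum_subtractf)

lemma mod_add_pred_Suc_mod:
  fixes k N :: nat
  assumes "k < N"
  shows "((k + 1) mod N + N - 1) mod N = k"
proof (cases "k + 1 < N")
  case True
  then have "(k + 1) mod N + N - 1 = k + N" by simp
  then show ?thesis using assms by simp
next
  case False
  then show ?thesis using assms by (simp add: le_mod_geq)
qed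

context
  fixes H :: "complex^2^2"
  assumes H: "hermitian_sig11 H"
begin

lemma polygon_area_base_change:
  assumes c: "c \<in> cdisc H" and c': "c' \<in> cdisc H"
    and X: "\<forall>k<N. X k \<in> cdisc H" and N: "N > 0"
  shows "polygon_area H c X N = polygon_area H c' X N"
proof -
  have "area_arg H c (X k) (X ((k+1) mod N)) = area_arg H c' (X k) (X ((k+1) mod N))
       + (area_arg H c c' (X ((k+1) mod N)) - area_arg H c c' (X k))" if k: "k < N" for k
    using area_arg_cocycle[OF H c c', of "X k" "X ((k+1) mod N)"] X k N by simp
  then have "polygon_area H c X N = (\<Sum>k<N. area_arg H c' (X k) (X ((k+1) mod N)))
      + (\<Sum>k<N. area_arg H c c' (X ((k+1) mod N)) - area_arg H c c' (X k))"
    unfolding polygon_area_def by (simp add: sum.distrib)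
  then show ?thesis
    unfolding polygon_area_def using sum_lessThan_telescope_mod[OF N] by simp
qed

lemma area_arg_edge_change:
  assumes c: "c \<in> cdisc H" and a: "a \<in> cdisc H" and a': "a' \<in> cdisc H"
    and b: "b \<in> cdisc H" and b': "b' \<in> cdisc H" and o: "a = a' \<or> b = b'"
  shows "area_arg H c a b - area_arg H c a' b'
    = area_arg H c a a' - area_arg H c b b' - area_arg H a a' b + area_arg H b b' a"
proof (cases "a = a'")
  case True
  then show ?thesis
    using area_arg_cocycle[OF H c a b b'] area_arg_repeat_right[OF H a, of c]
      area_arg_repeat_left[OF H a, of b] area_arg_cycle[of H a b b'] by simp
next
  case False
  then have "b = b'" using o by simp
  then show ?thesis
    using area_arg_cocycle[OF H c a a' b] area_arg_repeat_right[OF H b, of c]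
      area_arg_repeat_left[OF H b, of a] by simp
qed

lemma polygon_area_vertex_change:
  assumes c: "c \<in> cdisc H"
    and X: "\<forall>k<N. X k \<in> cdisc H" and X': "\<forall>k<N. X' k \<in> cdisc H" and N: "N > 0"
    and adj: "\<forall>k<N. X k = X' k \<or> X ((k+1) mod N) = X' ((k+1) mod N)"
  shows "polygon_area H c X N - polygon_area H c X' N
    = (\<Sum>k<N. area_arg H (X k) (X' k) (X ((k+N-1) mod N)))
      - (\<Sum>k<N. area_arg H (X k) (X' k) (X ((k+1) mod N)))"
proof -
  define \<phi> where "\<phi> t = area_arg H c (X t) (X' t)" for t
  define \<psi> where "\<psi> t = area_arg H (X t) (X' t) (X ((t+N-1) mod N))" for t
  have "area_arg H c (X k) (X ((k+1) mod N)) - area_arg H c (X' k) (X' ((k+1) mod N))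
      = (\<phi> k - \<phi> ((k+1) mod N)) - area_arg H (X k) (X' k) (X ((k+1) mod N)) + \<psi> ((k+1) mod N)"
    if k: "k < N" for k
    unfolding \<phi>_def \<psi>_def mod_add_pred_Suc_mod[OF k]
    by (rule area_arg_edge_change[OF c]) (use X X' k N adj in \<open>simp_all\<close>)
  then have "polygon_area H c X N - polygon_area H c X' N
      = (\<Sum>k<N. (\<phi> k - \<phi> ((k+1) mod N)) - area_arg H (X k) (X' k) (X ((k+1) mod N))
          + \<psi> ((k+1) mod N))"
    unfolding polygon_area_def sum_subtractf[symmetric] by (intro sum.cong) simp_all
  also have "\<dots> = (\<Sum>k<N. \<phi> k - \<phi> ((k+1) mod N))
      - (\<Sum>k<N. area_arg H (X k) (X' k) (X ((k+1) mod N))) + (\<Sum>k<N. \<psi> ((k+1) mod N))"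
    by (simp only: sum.distrib sum_subtractf)
  also have "(\<Sum>k<N. \<phi> k - \<phi> ((k+1) mod N)) = 0"
    using sum_lessThan_telescope_mod[OF N, of \<phi>] by (simp add: sum_subtractf)
  also have "(\<Sum>k<N. \<psi> ((k+1) mod N)) = (\<Sum>k<N. \<psi> k)" by (rule sum_lessThan_rotate1[OF N])
  finally show ?thesis unfolding \<psi>_def by simp
qed

end

section \<open>Words in the generators\<close>

declare hn_eq.trans[trans]

lemma hn_eq_append_cong: "hn_eq n u v \<Longrightarrow> hn_eq n (x @ u @ y) (x @ v @ y)"
proof (induction rule: hn_eq.induct)
  case (refl u)
  show ?case by (rule hn_eq.refl)
next
  case (sym u v)
  show ?case by (rule hn_eq.sym[OF sym.IH])
next
  case (trans u v w)
  then show ?case by (blast intro: hn_eq.trans)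
next
  case (sq i u v)
  have "hn_eq n ((x @ u) @ [i, i] @ (v @ y)) ((x @ u) @ (v @ y))" by (rule hn_eq.sq[OF sq])
  then show ?case by simp
next
  case (rel u v)
  have "hn_eq n ((x @ u) @ rev [1..<n+1] @ (v @ y)) ((x @ u) @ (v @ y))" by (rule hn_eq.rel)
  then show ?case by simp
qed

lemma hn_eq_cancel_pair: "i \<in> {1..n} \<Longrightarrow> hn_eq n (x @ i # i # y) (x @ y)"
  using hn_eq.sq[of i n x y] by simp

lemma hn_eq_cancel_rev_left: "set u \<subseteq> {1..n} \<Longrightarrow> hn_eq n (x @ rev u @ u @ y) (x @ y)"
proof (induction u arbitrary: x y)
  case Nil
  show ?case by (simp add: hn_eq.refl)
next
  case (Cons a u)
  have a: "a \<in> {1..n}" and su: "set u \<subseteq> {1..n}" using Cons.prems by auto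
  have "hn_eq n ((x @ rev u) @ a # a # (u @ y)) ((x @ rev u) @ (u @ y))"
    by (rule hn_eq_cancel_pair[OF a])
  then have "hn_eq n (x @ rev (a # u) @ (a # u) @ y) (x @ rev u @ u @ y)" by simp
  also have "hn_eq n (x @ rev u @ u @ y) (x @ y)" by (rule Cons.IH[OF su])
  finally show ?case .
qed

lemma hn_eq_cancel_rev_right: "set u \<subseteq> {1..n} \<Longrightarrow> hn_eq n (x @ u @ rev u @ y) (x @ y)"
  using hn_eq_cancel_rev_left[of "rev u" n x y] by simp

lemma hn_eq_cancel_vword: "hn_eq n (x @ vword n @ y) (x @ y)"
  unfolding vword_def by (rule hn_eq.rel)

lemma hn_eq_rev: "hn_eq n u v \<Longrightarrow> hn_eq n (rev u) (rev v)"
proof (induction rule: hn_eq.induct)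
  case (refl u)
  show ?case by (rule hn_eq.refl)
next
  case (sym u v)
  show ?case by (rule hn_eq.sym[OF sym.IH])
next
  case (trans u v w)
  then show ?case by (blast intro: hn_eq.trans)
next
  case (sq i u v)
  have "hn_eq n (rev v @ [i, i] @ rev u) (rev v @ rev u)" by (rule hn_eq.sq[OF sq])
  then show ?case by simp
next
  case (rel u v)
  have s: "set [1..<n+1] \<subseteq> {1..n}" by auto
  have "hn_eq n ((rev v @ [1..<n+1]) @ rev [1..<n+1] @ rev u) ((rev v @ [1..<n+1]) @ rev u)"
    by (rule hn_eq.rel)
  from hn_eq.sym[OF this]
  have "hn_eq n (rev v @ [1..<n+1] @ rev u) (rev v @ [1..<n+1] @ rev [1..<n+1] @ rev u)"
    by simp
  also have "hn_eq n (rev v @ [1..<n+1] @ rev [1..<n+1] @ rev u) (rev v @ rev u)"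
    by (rule hn_eq_cancel_rev_right[OF s])
  finally show ?case by simp
qed

lemma shift_in_range: "n \<ge> 1 \<Longrightarrow> i \<in> {1..n} \<Longrightarrow> shift n i \<in> {1..n}"
  by (auto simp: shift_def)

lemma map_shift_relator:
  assumes "n \<ge> 1"
  shows "map (shift n) (rev [1..<n+1]) = 1 # rev [2..<n+1]"
proof -
  have e: "[1..<n+1] = [1..<n] @ [n]" using assms by simp
  have "map (shift n) [1..<n] = map Suc [1..<n]"
    by (rule map_cong) (auto simp: shift_def)
  also have "\<dots> = [2..<n+1]" by (simp add: map_Suc_upt numeral_2_eq_2)
  finally have m: "map (shift n) [1..<n] = [2..<n+1]" .
  have "map (shift n) (rev [1..<n]) = rev [2..<n+1]"
    by (simp only: rev_map[symmetric] m)
  then show ?thesis unfolding e by (simp add: shift_def)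
qed

lemma hn_eq_map_shift:
  assumes n: "n \<ge> 1"
  shows "hn_eq n u v \<Longrightarrow> hn_eq n (map (shift n) u) (map (shift n) v)"
proof (induction rule: hn_eq.induct)
  case (refl u)
  show ?case by (rule hn_eq.refl)
next
  case (sym u v)
  show ?case by (rule hn_eq.sym[OF sym.IH])
next
  case (trans u v w)
  then show ?case by (blast intro: hn_eq.trans)
next
  case (sq i u v)
  have "hn_eq n (map (shift n) u @ [shift n i, shift n i] @ map (shift n) v)
      (map (shift n) u @ map (shift n) v)"
    by (rule hn_eq.sq[OF shift_in_range[OF n sq]])
  then show ?case by simp
next
  case (rel u v)
  define x where "x = map (shift n) u"
  define y where "y = map (shift n) v"
  have one: "(1::nat) \<in> {1..n}" using n by simp
  have "[1..<n+1] = 1 # [2..<n+1]" using n by (simp add: upt_conv_Cons numeral_2_eq_2)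
  then have r: "rev [1..<n+1] = rev [2..<n+1] @ [1]" by simp
  have "hn_eq n (x @ 1 # rev [2..<n+1] @ y) ((x @ 1 # rev [2..<n+1]) @ 1 # 1 # y)"
    using hn_eq.sym[OF hn_eq_cancel_pair[OF one, of "x @ 1 # rev [2..<n+1]" y]] by simp
  also have "(x @ 1 # rev [2..<n+1]) @ 1 # 1 # y = (x @ [1]) @ rev [1..<n+1] @ (1 # y)"
    unfolding r by simp
  also have "hn_eq n ((x @ [1]) @ rev [1..<n+1] @ (1 # y)) ((x @ [1]) @ (1 # y))"
    by (rule hn_eq.rel)
  also have "(x @ [1]) @ (1 # y) = x @ 1 # 1 # y" by simp
  also have "hn_eq n (x @ 1 # 1 # y) (x @ y)" by (rule hn_eq_cancel_pair[OF one])
  finally show ?case unfolding x_def y_def using map_shift_relator[OF n] by simp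
qed

lemma vword_Suc: "vword (Suc k) = Suc k # vword k"
  by (simp add: vword_def)

lemma vword_0: "vword 0 = []"
  by (simp add: vword_def)

lemma set_vword: "set (vword k) = {1..k}"
  by (auto simp: vword_def)

lemma length_vword: "length (vword k) = k"
  by (simp add: vword_def)

lemma map_shift_vword: "k < n \<Longrightarrow> map (shift n) (vword k) @ [1] = vword (Suc k)"
proof (induction k)
  case 0
  show ?case by (simp add: vword_def)
next
  case (Suc k)
  then have "map (shift n) (vword k) @ [1] = vword (Suc k)" by simp
  moreover have "shift n (Suc k) = Suc (Suc k)" using Suc.prems by (simp add: shift_def)
  ultimately show ?case by (simp add: vword_Suc)
qed

definition wbase :: "nat \<Rightarrow> nat \<Rightarrow> nat list" where
  "wbase n i = (if even i then vword i else vword i @ [n])"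

lemma wword_low: "j \<le> n - 2 \<Longrightarrow> wword n j = wbase n j"
  by (simp add: wword_def wbase_def)

lemma wword_high: "\<not> j \<le> n - 2 \<Longrightarrow> wword n j = [n] @ wbase n (j - (n - 1)) @ [n]"
  by (simp add: wword_def wbase_def)

lemma wbase_even: "even i \<Longrightarrow> wbase n i = vword i"
  by (simp add: wbase_def)

lemma wbase_odd: "odd i \<Longrightarrow> wbase n i = vword i @ [n]"
  by (simp add: wbase_def)

lemma hn_eq_vword_pred:
  assumes "n \<ge> 2"
  shows "hn_eq n ((n-1) # vword (n-2)) [n]"
proof -
  define m where "m = n - 2"
  have m: "n = Suc (Suc m)" using assms unfolding m_def by simp
  have vn: "vword n = n # (n-1) # vword (n-2)"
    unfolding m by (simp add: vword_Suc)
  have nn: "n \<in> {1..n}" using assms by simp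
  have "hn_eq n ((n-1) # vword (n-2)) ([] @ n # n # ((n-1) # vword (n-2)))"
    using hn_eq.sym[OF hn_eq_cancel_pair[OF nn, of "[]" "(n-1) # vword (n-2)"]] by simp
  also have "[] @ n # n # ((n-1) # vword (n-2)) = [n] @ vword n @ []" using vn by simp
  also have "hn_eq n ([n] @ vword n @ []) ([n] @ [])" by (rule hn_eq_cancel_vword)
  finally show ?thesis by simp
qed

lemma hn_eq_rev_vword_pred:
  assumes "n \<ge> 2"
  shows "hn_eq n (rev (vword (n-2)) @ [n-1]) [n]"
  using hn_eq_rev[OF hn_eq_vword_pred[OF assms]] by simp

lemma hn_eq_rev_vword_conj:
  assumes n: "n \<ge> 2"
  shows "hn_eq n (rev (vword (n-2))) ([n] @ vword (n-2) @ [n])"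
proof -
  define V where "V = vword (n-2)"
  have nn: "n \<in> {1..n}" using n by simp
  have f1: "hn_eq n ((n-1) # V) [n]" unfolding V_def by (rule hn_eq_vword_pred[OF n])
  have f2: "hn_eq n (rev V @ [n-1]) [n]" unfolding V_def by (rule hn_eq_rev_vword_pred[OF n])
  have "hn_eq n ([] @ [n] @ (V @ [n])) ([] @ (rev V @ [n-1]) @ (V @ [n]))"
    by (rule hn_eq_append_cong[OF hn_eq.sym[OF f2]])
  also have "[] @ (rev V @ [n-1]) @ (V @ [n]) = (rev V @ [n-1] @ V) @ [n] @ []" by simp
  also have "hn_eq n ((rev V @ [n-1] @ V) @ [n] @ []) ((rev V @ [n-1] @ V) @ ((n-1) # V) @ [])"
    by (rule hn_eq_append_cong[OF hn_eq.sym[OF f1]])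
  also have "(rev V @ [n-1] @ V) @ ((n-1) # V) @ [] = rev V @ ((n-1) # V) @ ((n-1) # V)" by simp
  also have "hn_eq n (rev V @ ((n-1) # V) @ ((n-1) # V)) (rev V @ [n] @ ((n-1) # V))"
    by (rule hn_eq_append_cong[OF f1])
  also have "rev V @ [n] @ ((n-1) # V) = (rev V @ [n]) @ ((n-1) # V) @ []" by simp
  also have "hn_eq n ((rev V @ [n]) @ ((n-1) # V) @ []) ((rev V @ [n]) @ [n] @ [])"
    by (rule hn_eq_append_cong[OF f1])
  also have "(rev V @ [n]) @ [n] @ [] = rev V @ n # n # []" by simp
  also have "hn_eq n (rev V @ n # n # []) (rev V @ [])" by (rule hn_eq_cancel_pair[OF nn])
  finally have "hn_eq n ([n] @ V @ [n]) (rev V)" by simp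
  then show ?thesis unfolding V_def by (rule hn_eq.sym)
qed

lemma hn_eq_wbase_step:
  assumes i: "i + 1 \<le> n - 2"
  shows "hn_eq n (wbase n (i+1) @ [n] @ rev (wbase n i) @ wbase n (i+1)) (wbase n i @ [n])"
proof -
  have nn: "n \<in> {1..n}" and si: "Suc i \<in> {1..n}" using i by auto
  have sv: "set (vword i) \<subseteq> {1..n}" using i by (auto simp: set_vword)
  show ?thesis
  proof (cases "even i")
    case True
    have w0: "wbase n i = vword i" using True by (simp add: wbase_even)
    have w1: "wbase n (i+1) = Suc i # vword i @ [n]" using True by (simp add: wbase_odd vword_Suc)
    have "hn_eq n ((Suc i # vword i) @ n # n # (rev (vword i) @ Suc i # vword i @ [n]))
                  ((Suc i # vword i) @ (rev (vword i) @ Suc i # vword i @ [n]))"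
      by (rule hn_eq_cancel_pair[OF nn])
    also have "(Suc i # vword i) @ (rev (vword i) @ Suc i # vword i @ [n])
        = [Suc i] @ vword i @ rev (vword i) @ (Suc i # vword i @ [n])" by simp
    also have "hn_eq n ([Suc i] @ vword i @ rev (vword i) @ (Suc i # vword i @ [n]))
        ([Suc i] @ (Suc i # vword i @ [n]))"
      by (rule hn_eq_cancel_rev_right[OF sv])
    also have "[Suc i] @ (Suc i # vword i @ [n]) = [] @ Suc i # Suc i # (vword i @ [n])" by simp
    also have "hn_eq n ([] @ Suc i # Suc i # (vword i @ [n])) ([] @ (vword i @ [n]))"
      by (rule hn_eq_cancel_pair[OF si])
    finally show ?thesis unfolding w0 w1 by simp
  next
    case False
    have w0: "wbase n i = vword i @ [n]" using False by (simp add: wbase_odd)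
    have w1: "wbase n (i+1) = Suc i # vword i" using False by (simp add: wbase_even vword_Suc)
    have "hn_eq n ((Suc i # vword i) @ n # n # (rev (vword i) @ Suc i # vword i))
                  ((Suc i # vword i) @ (rev (vword i) @ Suc i # vword i))"
      by (rule hn_eq_cancel_pair[OF nn])
    also have "(Suc i # vword i) @ (rev (vword i) @ Suc i # vword i)
        = [Suc i] @ vword i @ rev (vword i) @ (Suc i # vword i)" by simp
    also have "hn_eq n ([Suc i] @ vword i @ rev (vword i) @ (Suc i # vword i))
        ([Suc i] @ (Suc i # vword i))"
      by (rule hn_eq_cancel_rev_right[OF sv])
    also have "[Suc i] @ (Suc i # vword i) = [] @ Suc i # Suc i # vword i" by simp
    also have "hn_eq n ([] @ Suc i # Suc i # vword i) ([] @ vword i)"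
      by (rule hn_eq_cancel_pair[OF si])
    also have "hn_eq n ([] @ vword i) (vword i @ n # n # [])"
      using hn_eq.sym[OF hn_eq_cancel_pair[OF nn, of "vword i" "[]"]] by simp
    finally show ?thesis unfolding w0 w1 by simp
  qed
qed

lemma mod_eq_diff_if_less_double: "(N::nat) \<le> a \<Longrightarrow> a < 2 * N \<Longrightarrow> a mod N = a - N"
  by (simp add: le_mod_geq)

lemma wword_special:
  assumes "n \<ge> 4" "even n"
  shows "wword n 0 = []" "wword n (n-2) = vword (n-2)" "wword n (n-1) = [n, n]"
    "wword n (2*n-3) = [n] @ vword (n-2) @ [n]"
  using assms by (simp_all add: wword_low wword_high wbase_even vword_0)

lemma hn_eq_rev_vword_append_pair:
  assumes "n \<ge> 4"
  shows "hn_eq n (rev (vword (n-2)) @ [n, n]) ([n] @ vword (n-2) @ [n])"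
proof -
  have "hn_eq n (rev (vword (n-2)) @ n # n # []) (rev (vword (n-2)) @ [])"
    by (rule hn_eq_cancel_pair) (use assms in simp)
  also have "hn_eq n (rev (vword (n-2)) @ []) ([n] @ vword (n-2) @ [n])"
    using hn_eq_rev_vword_conj[of n] assms by simp
  finally show ?thesis by simp
qed

lemma hn_eq_pair_append_rev_conj_vword:
  assumes "n \<ge> 4"
  shows "hn_eq n ([n, n] @ rev ([n] @ vword (n-2) @ [n])) (vword (n-2))"
proof -
  have nn: "n \<in> {1..n}" using assms by simp
  have "hn_eq n ([] @ n # n # ([n] @ rev (vword (n-2)) @ [n]))
      ([] @ ([n] @ rev (vword (n-2)) @ [n]))"
    by (rule hn_eq_cancel_pair[OF nn])
  also have "[] @ ([n] @ rev (vword (n-2)) @ [n]) = [n] @ rev (vword (n-2)) @ [n]" by simp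
  also have "hn_eq n \<dots> ([n] @ ([n] @ vword (n-2) @ [n]) @ [n])"
    by (rule hn_eq_append_cong[OF hn_eq_rev_vword_conj]) (use assms in simp)
  also have "[n] @ ([n] @ vword (n-2) @ [n]) @ [n] = [] @ n # n # (vword (n-2) @ [n, n])" by simp
  also have "hn_eq n \<dots> ([] @ (vword (n-2) @ [n, n]))" by (rule hn_eq_cancel_pair[OF nn])
  also have "[] @ (vword (n-2) @ [n, n]) = vword (n-2) @ n # n # []" by simp
  also have "hn_eq n \<dots> (vword (n-2) @ [])" by (rule hn_eq_cancel_pair[OF nn])
  finally show ?thesis by simp
qed

lemma hn_eq_wword_antipodal_low:
  assumes n4: "n \<ge> 4" and ev: "even n" and k: "k \<le> n - 2"
  shows "hn_eq n (wword n ((k+n) mod (2*n-2)) @ rev (wword n k) @ wword n ((k+1) mod (2*n-2)))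
                 (wword n (((k+n) mod (2*n-2) + (2*n-2) - 1) mod (2*n-2)))"
proof (cases "k = n - 2")
  case True
  have "k + n = 2*n-2" using True n4 by simp
  then have m: "(k+n) mod (2*n-2) = 0" "(k+1) mod (2*n-2) = n-1"
    "(0 + (2*n-2) - 1) mod (2*n-2) = 2*n-3"
    using True n4 by simp_all
  show ?thesis
    unfolding m unfolding True wword_special[OF n4 ev] using hn_eq_rev_vword_append_pair[OF n4]
    by simp
next
  case False
  then have k2: "k + 2 < n" using k by linarith
  have m: "(k+n) mod (2*n-2) = k+n" "(k+1) mod (2*n-2) = k+1"
    "(k+n + (2*n-2) - 1) mod (2*n-2) = k+n-1"
    using k2 n4 by (simp_all add: mod_eq_diff_if_less_double)
  have w: "wword n (k+n) = [n] @ wbase n (k+1) @ [n]" "wword n k = wbase n k"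
    "wword n (k+1) = wbase n (k+1)" "wword n (k+n-1) = [n] @ wbase n k @ [n]"
    using k2 n4 by (simp_all add: wword_high wword_low)
  have "hn_eq n ([n] @ (wbase n (k+1) @ [n] @ rev (wbase n k) @ wbase n (k+1)) @ [])
      ([n] @ (wbase n k @ [n]) @ [])"
    by (rule hn_eq_append_cong[OF hn_eq_wbase_step]) (use k2 in simp)
  then show ?thesis unfolding m w by simp
qed

lemma hn_eq_wword_antipodal_high:
  assumes n4: "n \<ge> 4" and ev: "even n" and k: "n - 1 \<le> k" "k < 2*n-2"
  shows "hn_eq n (wword n ((k+n) mod (2*n-2)) @ rev (wword n k) @ wword n ((k+1) mod (2*n-2)))
                 (wword n (((k+n) mod (2*n-2) + (2*n-2) - 1) mod (2*n-2)))"
proof (cases "k = 2*n-3")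
  case True
  have "k + 1 = 2*n-2" using True n4 by simp
  then have m: "(k+n) mod (2*n-2) = n-1" "(k+1) mod (2*n-2) = 0"
    "(n-1 + (2*n-2) - 1) mod (2*n-2) = n-2"
    using True n4 by (simp_all add: mod_eq_diff_if_less_double)
  show ?thesis
    unfolding m unfolding True wword_special[OF n4 ev] using hn_eq_pair_append_rev_conj_vword[OF n4]
    by simp
next
  case False
  define i where "i = k - (n-1)"
  have nn: "n \<in> {1..n}" using n4 by simp
  have i: "i + 1 \<le> n - 2" using False k n4 unfolding i_def by linarith
  have m: "(k+n) mod (2*n-2) = i+1" "(k+1) mod (2*n-2) = k+1" "(i+1 + (2*n-2) - 1) mod (2*n-2) = i"
    using False k i n4 unfolding i_def by (simp_all add: mod_eq_diff_if_less_double)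
  have w: "wword n (i+1) = wbase n (i+1)" "wword n k = [n] @ wbase n i @ [n]"
    "wword n (k+1) = [n] @ wbase n (i+1) @ [n]" "wword n i = wbase n i"
    using False k i n4 unfolding i_def by (simp_all add: wword_low wword_high Suc_diff_le)
  have "hn_eq n ((wbase n (i+1) @ [n] @ rev (wbase n i)) @ n # n # (wbase n (i+1) @ [n]))
                ((wbase n (i+1) @ [n] @ rev (wbase n i)) @ (wbase n (i+1) @ [n]))"
    by (rule hn_eq_cancel_pair[OF nn])
  also have "(wbase n (i+1) @ [n] @ rev (wbase n i)) @ (wbase n (i+1) @ [n])
     = [] @ (wbase n (i+1) @ [n] @ rev (wbase n i) @ wbase n (i+1)) @ [n]" by simp
  also have "hn_eq n \<dots> ([] @ (wbase n i @ [n]) @ [n])"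
    by (rule hn_eq_append_cong[OF hn_eq_wbase_step[OF i]])
  also have "[] @ (wbase n i @ [n]) @ [n] = wbase n i @ n # n # []" by simp
  also have "hn_eq n \<dots> (wbase n i @ [])" by (rule hn_eq_cancel_pair[OF nn])
  finally show ?thesis unfolding m w by simp
qed

text \<open>The element \<open>w_(k+n) w_k\<inverse>\<close> maps the triangle on \<open>w_k, w_(k+1)\<close> to the one on
  \<open>w_(k+n), w_(k+n-1)\<close>: the indices are taken modulo \<open>2n - 2\<close>.\<close>

lemma hn_eq_wword_antipodal:
  assumes n4: "n \<ge> 4" and ev: "even n" and k: "k < 2*n-2"
  shows "hn_eq n (wword n ((k+n) mod (2*n-2)) @ rev (wword n k) @ wword n ((k+1) mod (2*n-2)))
                 (wword n (((k+n) mod (2*n-2) + (2*n-2) - 1) mod (2*n-2)))"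
  using hn_eq_wword_antipodal_low[OF n4 ev] hn_eq_wword_antipodal_high[OF n4 ev _ k]
  by (cases "k \<le> n - 2") auto

lemma map_shift_vword_snoc: "i < n \<Longrightarrow> map (shift n) (vword i @ [n]) = vword (Suc i)"
  using map_shift_vword[of i n] by (simp add: shift_def)

lemma hn_eq_map_shift_vword_append:
  assumes "n \<ge> 4"
  shows "hn_eq n (map (shift n) (vword (n-2)) @ [1, n]) [n, n]"
proof -
  have "n - 1 = Suc (n-2)" using assms by simp
  then have "map (shift n) (vword (n-2)) @ [1] = (n-1) # vword (n-2)"
    using map_shift_vword[of "n-2" n] assms by (simp add: vword_Suc)
  moreover have "hn_eq n ([] @ ((n-1) # vword (n-2)) @ [n]) ([] @ [n] @ [n])"
    by (rule hn_eq_append_cong[OF hn_eq_vword_pred]) (use assms in simp)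
  ultimately show ?thesis by (metis append.assoc append_Cons append_Nil)
qed

lemma hn_eq_map_shift_conj_vword:
  assumes "n \<ge> 4"
  shows "hn_eq n (map (shift n) ([n] @ vword (n-2) @ [n])) [1, n]"
proof -
  have "n - 1 = Suc (n-2)" using assms by simp
  then have e: "map (shift n) ([n] @ vword (n-2) @ [n]) = [1] @ ((n-1) # vword (n-2)) @ []"
    using map_shift_vword[of "n-2" n] assms by (simp add: vword_Suc shift_def)
  have "hn_eq n ([1] @ ((n-1) # vword (n-2)) @ []) ([1] @ [n] @ [])"
    by (rule hn_eq_append_cong[OF hn_eq_vword_pred]) (use assms in simp)
  then show ?thesis unfolding e by simp
qed

lemma hn_eq_wword_shift_low:
  assumes n4: "n \<ge> 4" and ev: "even n" and j: "j \<le> n - 2"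
  shows "hn_eq n (if even j then map (shift n) (wword n j) @ [1, n] else map (shift n) (wword n j))
                 ((if j \<le> n - 2 then [] else [1, n]) @ wword n ((j+1) mod (2*n-2)))"
proof -
  consider (mid) "j = n - 2" | (lo) "j + 1 \<le> n - 2" using j by linarith
  then show ?thesis
  proof cases
    case mid
    have m: "(j+1) mod (2*n-2) = n-1" using mid n4 by simp
    have "even j" using mid ev n4 by simp
    then show ?thesis
      unfolding m unfolding mid wword_special[OF n4 ev] using hn_eq_map_shift_vword_append[OF n4]
      by simp
  next
    case lo
    have m: "(j+1) mod (2*n-2) = j+1" using lo n4 by simp
    show ?thesis
    proof (cases "even j")
      case True
      have "map (shift n) (vword j) @ [1] = vword (Suc j)"
        by (rule map_shift_vword) (use lo n4 in simp)
      then have "map (shift n) (wword n j) @ [1, n] = wword n (j+1)"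
        using j lo True by (simp add: wword_low wbase_def)
      then show ?thesis using j True m by (simp add: hn_eq.refl)
    next
      case False
      have "map (shift n) (vword j @ [n]) = vword (Suc j)"
        by (rule map_shift_vword_snoc) (use lo n4 in simp)
      then have "map (shift n) (wword n j) = wword n (j+1)"
        using j lo False by (simp add: wword_low wbase_def)
      then show ?thesis using j False m by (simp add: hn_eq.refl)
    qed
  qed
qed

lemma hn_eq_wword_shift_high_even:
  assumes n4: "n \<ge> 4" and ev: "even n" and j: "n - 1 \<le> j" "j < 2*n-2" and ej: "even j"
  shows "hn_eq n (map (shift n) (wword n j) @ [1, n]) ([1, n] @ wword n (j+1))"
proof -
  define i where "i = j - (n-1)"
  have nn: "n \<in> {1..n}" and one: "(1::nat) \<in> {1..n}" using n4 by auto
  have oi: "odd i" using j ej ev n4 unfolding i_def by (simp add: even_diff_nat)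
  have jj: "j + 1 < 2*n-2" using j ej ev n4 by presburger
  have i2: "i + 1 \<le> n - 2" using j jj n4 unfolding i_def by linarith
  have w2: "wword n (j+1) = [n] @ vword (Suc i) @ [n]" using j oi jj n4 unfolding i_def
    by (simp add: wword_high wbase_even Suc_diff_le)
  have "map (shift n) (vword i @ [n]) = vword (Suc i)"
    by (rule map_shift_vword_snoc) (use i2 in simp)
  then have l: "map (shift n) (wword n j) @ [1, n] = ([1] @ vword (Suc i)) @ 1 # 1 # [n]"
    using j oi n4 unfolding i_def by (simp add: wword_high wbase_odd shift_def)
  have "hn_eq n (([1] @ vword (Suc i)) @ 1 # 1 # [n]) (([1] @ vword (Suc i)) @ [n])"
    by (rule hn_eq_cancel_pair[OF one])
  also have "([1] @ vword (Suc i)) @ [n] = [1] @ vword (Suc i) @ [n]" by simp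
  also have "hn_eq n \<dots> ([1] @ n # n # (vword (Suc i) @ [n]))"
    by (rule hn_eq.sym[OF hn_eq_cancel_pair[OF nn]])
  finally show ?thesis unfolding l w2 by simp
qed

lemma hn_eq_wword_shift_high_odd:
  assumes n4: "n \<ge> 4" and ev: "even n" and j: "n - 1 \<le> j" "j < 2*n-2" and oj: "odd j"
  shows "hn_eq n (map (shift n) (wword n j)) ([1, n] @ wword n ((j+1) mod (2*n-2)))"
proof (cases "j = 2*n-3")
  case True
  then have "j + 1 = 2*n-2" using n4 by simp
  then have m: "(j+1) mod (2*n-2) = 0" by simp
  show ?thesis
    unfolding m unfolding True wword_special[OF n4 ev] using hn_eq_map_shift_conj_vword[OF n4]
    by simp
next
  case False
  define i where "i = j - (n-1)"
  have nn: "n \<in> {1..n}" using n4 by simp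
  have ei: "even i" using j oj ev n4 unfolding i_def by (simp add: even_diff_nat)
  have jj: "j + 1 < 2*n-2" using j False by simp
  have i2: "i + 1 \<le> n - 2" using j jj n4 unfolding i_def by linarith
  have w2: "wword n ((j+1) mod (2*n-2)) = [n] @ (vword (Suc i) @ [n]) @ [n]"
    using j ei jj n4 unfolding i_def by (simp add: wword_high wbase_odd Suc_diff_le)
  have "map (shift n) (vword i) @ [1] = vword (Suc i)"
    by (rule map_shift_vword) (use i2 in simp)
  then have l: "map (shift n) (wword n j) = [1] @ vword (Suc i)"
    using j ei unfolding i_def by (simp add: wword_high wbase_even shift_def)
  have "hn_eq n ([1] @ n # n # (vword (Suc i) @ [n, n])) ([1] @ (vword (Suc i) @ [n, n]))"
    by (rule hn_eq_cancel_pair[OF nn])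
  also have "[1] @ (vword (Suc i) @ [n, n]) = ([1] @ vword (Suc i)) @ n # n # []" by simp
  also have "hn_eq n \<dots> (([1] @ vword (Suc i)) @ [])" by (rule hn_eq_cancel_pair[OF nn])
  finally show ?thesis unfolding l w2 by (simp add: hn_eq.sym)
qed

text \<open>The shift \<open>S\<close> maps \<open>w_j\<close> to \<open>w_(j+1)\<close>, up to the correction \<open>r_1 r_n\<close> on the left
  (second half of the indices) and on the right (even \<open>j\<close>).\<close>

lemma hn_eq_wword_shift:
  assumes n4: "n \<ge> 4" and ev: "even n" and j: "j < 2*n-2"
  shows "hn_eq n (if even j then map (shift n) (wword n j) @ [1, n] else map (shift n) (wword n j))
                 ((if j \<le> n - 2 then [] else [1, n]) @ wword n ((j+1) mod (2*n-2)))"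
proof (cases "j \<le> n - 2")
  case True
  then show ?thesis by (rule hn_eq_wword_shift_low[OF n4 ev])
next
  case False
  then have j1: "n - 1 \<le> j" by linarith
  show ?thesis
  proof (cases "even j")
    case True
    then have "j + 1 < 2*n-2" using j ev n4 by presburger
    then show ?thesis
      using hn_eq_wword_shift_high_even[OF n4 ev j1 j True] \<open>\<not> j \<le> n - 2\<close> True by simp
  next
    case False
    then show ?thesis
      using hn_eq_wword_shift_high_odd[OF n4 ev j1 j False] \<open>\<not> j \<le> n - 2\<close> by simp
  qed
qed

section \<open>Polygons of a representation\<close>

lemma proj_eq_refl: "proj_eq x x"
  unfolding proj_eq_def by (intro exI[of _ 1]) simp

lemma proj_eq_sym: "proj_eq x y \<Longrightarrow> proj_eq y x"
  unfolding proj_eq_def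
  by (metis divide_eq_0_iff one_neq_zero vector_smult_assoc nonzero_divide_eq_eq vector_smult_lid)

lemma proj_eq_trans [trans]: "proj_eq x y \<Longrightarrow> proj_eq y z \<Longrightarrow> proj_eq x z"
  unfolding proj_eq_def by (metis mult_eq_0_iff vector_smult_assoc)

lemma proj_eq_matrix_vector_mult: "proj_eq x y \<Longrightarrow> proj_eq (A *v x) (A *v y)"
  unfolding proj_eq_def by (metis vector_scalar_commute)

lemma mproj_eq_imp_proj_eq:
  assumes "mproj_eq A B"
  shows "proj_eq (A *v x) (B *v (x::complex^2))"
proof -
  obtain c where c: "c \<noteq> 0" "A = (\<chi> i j. c * B$i$j)" using assms unfolding mproj_eq_def by blast
  have "A *v x = c *s (B *v x)" unfolding c(2)
    by (simp add: vec_eq_iff matrix_vector_mult_def sum_distrib_left algebra_simps)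
  then show ?thesis using c(1) unfolding proj_eq_def by blast
qed

lemma area_arg_proj_eq_unitary:
  assumes "unitary_H H A" "proj_eq a (A *v a')" "proj_eq b (A *v b')" "proj_eq c (A *v c')"
  shows "area_arg H a b c = area_arg H a' b' c'"
  using area_arg_proj_eq[OF assms(2-4)] area_arg_unitary[OF assms(1)] by simp

text \<open>Words representing elements of \<open>G_n\<close>, the words on which \<open>hom_Gn\<close> constrains \<open>\<rho>\<close>.\<close>

definition even_word :: "nat \<Rightarrow> nat list \<Rightarrow> bool" where
  "even_word n u \<longleftrightarrow> valid_word n u \<and> even (length u)"

lemma even_word_append: "even_word n u \<Longrightarrow> even_word n v \<Longrightarrow> even_word n (u @ v)"
  by (simp add: even_word_def valid_word_def)

lemma even_word_rev: "even_word n u \<Longrightarrow> even_word n (rev u)"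
  by (simp add: even_word_def valid_word_def)

lemma even_word_Nil: "even_word n []"
  and even_word_pair: "i \<in> {1..n} \<Longrightarrow> j \<in> {1..n} \<Longrightarrow> even_word n [i, j]"
  by (auto simp: even_word_def valid_word_def)

lemma even_word_map_shift: "1 \<le> n \<Longrightarrow> even_word n u \<Longrightarrow> even_word n (map (shift n) u)"
  using shift_in_range by (auto simp: even_word_def valid_word_def)

lemma even_word_wword:
  assumes "n \<ge> 2" "j < 2*n-2"
  shows "even_word n (wword n j)"
proof -
  have a: "set (wbase n i) \<subseteq> {1..n}" "even (length (wbase n i))" if "i \<le> n - 2" for i
    using that assms(1) by (auto simp: wbase_def set_vword length_vword)
  show ?thesis
  proof (cases "j \<le> n - 2")
    case True
    then show ?thesis using a[of j] by (simp add: even_word_def valid_word_def wword_low)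
  next
    case False
    have "j - (n-1) \<le> n - 2" using assms by linarith
    then show ?thesis
      using a[of "j - (n-1)"] False assms(1) by (simp add: even_word_def valid_word_def wword_high)
  qed
qed

lemma hom_Gn_unitary: "hom_Gn n H \<sigma> \<Longrightarrow> even_word n u \<Longrightarrow> unitary_H H (\<sigma> u)"
  by (simp add: hom_Gn_def even_word_def)

lemma hom_Gn_Nil: "hom_Gn n H \<sigma> \<Longrightarrow> proj_eq (\<sigma> [] *v x) x"
  unfolding hom_Gn_def using mproj_eq_imp_proj_eq[of "\<sigma> []" "mat 1" x] by simp

lemma hom_Gn_append:
  assumes "hom_Gn n H \<sigma>" "even_word n u" "even_word n v"
  shows "proj_eq (\<sigma> (u @ v) *v x) (\<sigma> u *v (\<sigma> v *v x))"
proof -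
  have "mproj_eq (\<sigma> (u @ v)) (\<sigma> u ** \<sigma> v)" using assms unfolding hom_Gn_def even_word_def by blast
  then show ?thesis using mproj_eq_imp_proj_eq by (simp add: matrix_vector_mul_assoc)
qed

lemma hom_Gn_hn_eq:
  assumes "hom_Gn n H \<sigma>" "even_word n u" "even_word n v" "hn_eq n u v"
  shows "proj_eq (\<sigma> u *v x) (\<sigma> v *v x)"
  using assms unfolding hom_Gn_def even_word_def by (blast intro: mproj_eq_imp_proj_eq)

lemma hom_Gn_map_shift:
  assumes hom: "hom_Gn n H \<sigma>" and n: "n \<ge> 1"
  shows "hom_Gn n H (\<lambda>u. \<sigma> (map (shift n) u))"
proof -
  have "valid_word n (map (shift n) u)" if "valid_word n u" for u
    using that shift_in_range[OF n] by (auto simp: valid_word_def)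
  then show ?thesis using hom unfolding hom_Gn_def by (auto simp: hn_eq_map_shift[OF n])
qed

definition wvertex ::
    "nat \<Rightarrow> (nat list \<Rightarrow> complex^2^2) \<Rightarrow> complex^2 \<Rightarrow> complex^2 \<Rightarrow> nat \<Rightarrow> complex^2" where
  "wvertex n \<sigma> p q t = \<sigma> (wword n t) *v (if even t then p else q)"

context
  fixes H :: "complex^2^2"
  assumes H: "hermitian_sig11 H"
begin

lemma wvertex_cdisc:
  assumes hom: "hom_Gn n H \<sigma>" and n: "n \<ge> 2"
    and p: "p \<in> cdisc H" and q: "q \<in> cdisc H" and t: "t < 2*n-2"
  shows "wvertex n \<sigma> p q t \<in> cdisc H"
  unfolding wvertex_def using unitary_cdisc[OF H hom_Gn_unitary[OF hom even_word_wword[OF n t]]] p q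
  by simp

lemma Area_n_eq_polygon_area:
  assumes hom: "hom_Gn n H \<sigma>" and n: "n \<ge> 2"
    and p: "p \<in> cdisc H" and q: "q \<in> cdisc H" and c: "c \<in> cdisc H"
  shows "Area_n n H p q \<sigma> = polygon_area H c (wvertex n \<sigma> p q) (2*n-2)"
proof -
  define N where "N = 2*n-2"
  have N: "N > 0" using n by (simp add: N_def)
  define c0 where "c0 = (SOME c. c \<in> cdisc H)"
  have c0: "c0 \<in> cdisc H" unfolding c0_def using p by (rule someI)
  have X: "\<forall>k<N. wvertex n \<sigma> p q k \<in> cdisc H" using wvertex_cdisc[OF hom n p q] by (simp add: N_def)
  have "Area_n n H p q \<sigma> = poly_area_c H c0 (map (wvertex n \<sigma> p q) [0..<N])"
    unfolding Area_n_def poly_area_def c0_def N_def wvertex_def by simp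
  also have "\<dots> = (\<Sum>k<N. tri_area H c0 (wvertex n \<sigma> p q k) (wvertex n \<sigma> p q ((k+1) mod N)))"
    unfolding poly_area_c_def length_map length_upt diff_zero
  proof (rule sum.cong[OF HOL.refl])
    fix k assume k: "k \<in> {..<N}"
    have "(k+1) mod N < N" using N by simp
    then show "tri_area H c0 (map (wvertex n \<sigma> p q) [0..<N] ! k)
        (map (wvertex n \<sigma> p q) [0..<N] ! ((k + 1) mod N))
        = tri_area H c0 (wvertex n \<sigma> p q k) (wvertex n \<sigma> p q ((k+1) mod N))"
      using k by (simp only: nth_map length_upt diff_zero nth_upt add_0 lessThan_iff)
  qed
  also have "\<dots> = polygon_area H c0 (wvertex n \<sigma> p q) N"
    unfolding polygon_area_def by (simp only: tri_area_eq_area_arg[OF H])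
  also have "\<dots> = polygon_area H c (wvertex n \<sigma> p q) N"
    by (rule polygon_area_base_change[OF H c0 c X N])
  finally show ?thesis by (simp add: N_def)
qed

end

lemma even_mod_add_half:
  fixes n k :: nat
  assumes "even n" "n \<ge> 4" "k < 2*n-2"
  shows "even ((k+n) mod (2*n-2)) = even k"
proof (cases "k + n < 2*n-2")
  case True
  then show ?thesis using assms by simp
next
  case False
  then have e: "(k+n) mod (2*n-2) = k + n - (2*n-2)"
    using assms by (simp add: mod_eq_diff_if_less_double)
  have "even (k + n - (2*n-2)) = even k" using assms False by presburger
  then show ?thesis unfolding e .
qed

lemma even_mod_add_pred:
  fixes m N :: nat
  assumes "N > 0" "even N" "m < N"
  shows "even ((m + N - 1) mod N) = odd m"
proof (cases "m = 0")
  case True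
  then show ?thesis using assms by simp
next
  case False
  then have e: "(m + N - 1) mod N = m - 1" using assms by (simp add: mod_eq_diff_if_less_double)
  have "even (m - 1) = odd m" using False by presburger
  then show ?thesis unfolding e .
qed

lemma even_mod_Suc:
  fixes k N :: nat
  assumes "N > 0" "even N" "k < N"
  shows "even ((k + 1) mod N) = odd k"
proof (cases "k + 1 = N")
  case True
  then have "odd k" using assms by presburger
  then show ?thesis using True by simp
next
  case False
  then show ?thesis using assms by simp
qed

section \<open>Independence of the base points\<close>

lemma hom_Gn_proj_eq_append:
  assumes hom: "hom_Gn n H \<sigma>" and h: "even_word n h" and w: "even_word n w"
    and w': "even_word n w'" and e: "hn_eq n (h @ w) w'"
  shows "proj_eq (\<sigma> w' *v y) (\<sigma> h *v (\<sigma> w *v y))"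
proof -
  have "proj_eq (\<sigma> w' *v y) (\<sigma> (h @ w) *v y)"
    by (rule hom_Gn_hn_eq[OF hom w' even_word_append[OF h w] hn_eq.sym[OF e]])
  also have "proj_eq (\<sigma> (h @ w) *v y) (\<sigma> h *v (\<sigma> w *v y))" by (rule hom_Gn_append[OF hom h w])
  finally show ?thesis .
qed

lemma area_arg_wvertex_antipodal:
  assumes H: "hermitian_sig11 H" and hom: "hom_Gn n H \<sigma>" and n4: "n \<ge> 4" and ev: "even n"
    and k: "k < 2*n-2"
  defines "N \<equiv> 2*n-2"
  shows "area_arg H (wvertex n \<sigma> p q ((k+n) mod N)) (wvertex n \<sigma> p' q' ((k+n) mod N))
           (wvertex n \<sigma> p q (((k+n) mod N + N - 1) mod N))
       = area_arg H (wvertex n \<sigma> p q k) (wvertex n \<sigma> p' q' k) (wvertex n \<sigma> p q ((k+1) mod N))"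
proof -
  have N: "N > 0" "even N" using n4 by (auto simp: N_def)
  define m m' k1 where "m = (k+n) mod N" and "m' = (m + N - 1) mod N" and "k1 = (k+1) mod N"
  have "m < N" "m' < N" "k1 < N" "k < N" using N k by (auto simp: m_def m'_def k1_def N_def)
  then have wm: "even_word n (wword n m)" and wk: "even_word n (wword n k)"
    and wk1: "even_word n (wword n k1)" and wm': "even_word n (wword n m')"
    using even_word_wword[of n] n4 by (auto simp: N_def)
  define h where "h = wword n m @ rev (wword n k)"
  have wh: "even_word n h" unfolding h_def by (rule even_word_append[OF wm even_word_rev[OF wk]])
  have "set (wword n k) \<subseteq> {1..n}" using wk by (simp add: even_word_def valid_word_def)
  then have e1: "hn_eq n (h @ wword n k) (wword n m)"
    using hn_eq_cancel_rev_left[of "wword n k" n "wword n m" "[]"] unfolding h_def by simp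
  have e2: "hn_eq n (h @ wword n k1) (wword n m')"
    using hn_eq_wword_antipodal[OF n4 ev k] unfolding h_def m'_def m_def k1_def N_def by simp
  have pm: "even m = even k" unfolding m_def N_def by (rule even_mod_add_half[OF ev n4 k])
  have pm': "even m' = even k1"
    unfolding m'_def k1_def using even_mod_add_pred[OF N] even_mod_Suc[OF N] pm \<open>m < N\<close> \<open>k < N\<close>
    by simp
  have a1: "proj_eq (wvertex n \<sigma> p q m) (\<sigma> h *v wvertex n \<sigma> p q k)"
    and a2: "proj_eq (wvertex n \<sigma> p' q' m) (\<sigma> h *v wvertex n \<sigma> p' q' k)"
    unfolding wvertex_def pm by (rule hom_Gn_proj_eq_append[OF hom wh wk wm e1])+
  have a3: "proj_eq (wvertex n \<sigma> p q m') (\<sigma> h *v wvertex n \<sigma> p q k1)"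
    unfolding wvertex_def pm' by (rule hom_Gn_proj_eq_append[OF hom wh wk1 wm' e2])
  show ?thesis
    using area_arg_proj_eq_unitary[OF hom_Gn_unitary[OF hom wh] a1 a2 a3]
    unfolding m_def m'_def k1_def .
qed

lemma Area_n_base_point_change:
  assumes H: "hermitian_sig11 H" and hom: "hom_Gn n H \<sigma>" and n4: "n \<ge> 4" and ev: "even n"
    and p: "p \<in> cdisc H" and q: "q \<in> cdisc H" and p': "p' \<in> cdisc H" and q': "q' \<in> cdisc H"
    and o: "p = p' \<or> q = q'"
  shows "Area_n n H p q \<sigma> = Area_n n H p' q' \<sigma>"
proof -
  define N where "N = 2*n-2"
  have N: "N > 0" "even N" using n4 by (auto simp: N_def)
  have n2: "n \<ge> 2" using n4 by simp
  define X where "X = wvertex n \<sigma> p q"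
  define X' where "X' = wvertex n \<sigma> p' q'"
  have XC: "\<forall>k<N. X k \<in> cdisc H" using wvertex_cdisc[OF H hom n2 p q] by (simp add: X_def N_def)
  have XC': "\<forall>k<N. X' k \<in> cdisc H"
    using wvertex_cdisc[OF H hom n2 p' q'] by (simp add: X'_def N_def)
  have adj: "\<forall>k<N. X k = X' k \<or> X ((k+1) mod N) = X' ((k+1) mod N)"
  proof (intro allI impI)
    fix k assume k: "k < N"
    have "even ((k+1) mod N) = odd k" by (rule even_mod_Suc[OF N k])
    then show "X k = X' k \<or> X ((k+1) mod N) = X' ((k+1) mod N)"
      using o unfolding X_def X'_def wvertex_def by auto
  qed
  have A1: "Area_n n H p q \<sigma> = polygon_area H p X N"
    unfolding X_def N_def by (rule Area_n_eq_polygon_area[OF H hom n2 p q p])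
  have A2: "Area_n n H p' q' \<sigma> = polygon_area H p X' N"
    unfolding X'_def N_def by (rule Area_n_eq_polygon_area[OF H hom n2 p' q' p])
  have D: "polygon_area H p X N - polygon_area H p X' N =
     (\<Sum>k<N. area_arg H (X k) (X' k) (X ((k+N-1) mod N)))
      - (\<Sum>k<N. area_arg H (X k) (X' k) (X ((k+1) mod N)))"
    by (rule polygon_area_vertex_change[OF H p XC XC' N(1) adj])
  have "(\<Sum>k<N. area_arg H (X k) (X' k) (X ((k+N-1) mod N)))
      = (\<Sum>k<N. (\<lambda>t. area_arg H (X t) (X' t) (X ((t+N-1) mod N))) ((k + n) mod N))"
    by (rule sum_lessThan_rotate[OF N(1), symmetric])
  also have "\<dots> = (\<Sum>k<N. area_arg H (X k) (X' k) (X ((k+1) mod N)))"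
  proof (rule sum.cong[OF HOL.refl])
    fix k assume "k \<in> {..<N}"
    then have k: "k < 2*n-2" by (simp add: N_def)
    show "(\<lambda>t. area_arg H (X t) (X' t) (X ((t+N-1) mod N))) ((k + n) mod N)
      = area_arg H (X k) (X' k) (X ((k+1) mod N))"
      using area_arg_wvertex_antipodal[OF H hom n4 ev k, of p q p' q']
        unfolding X_def X'_def N_def by simp
  qed
  finally show ?thesis using A1 A2 D by simp
qed

lemma Area_n_base_points_independent:
  assumes H: "hermitian_sig11 H" and hom: "hom_Gn n H \<sigma>" and n4: "n \<ge> 4" and ev: "even n"
    and p: "p \<in> cdisc H" and q: "q \<in> cdisc H" and p': "p' \<in> cdisc H" and q': "q' \<in> cdisc H"
  shows "Area_n n H p q \<sigma> = Area_n n H p' q' \<sigma>"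
  using Area_n_base_point_change[OF H hom n4 ev p q p' q]
    Area_n_base_point_change[OF H hom n4 ev p' q p' q'] p q p' q' by simp

section \<open>Invariance under the shift\<close>

lemma wvertex_map_shift:
  assumes hom: "hom_Gn n H \<sigma>" and n4: "n \<ge> 4" and ev: "even n" and j: "j < 2*n-2"
  shows "proj_eq (wvertex n (\<lambda>u. \<sigma> (map (shift n) u)) (\<sigma> [1, n] *v q) p j)
           (\<sigma> (if j \<le> n - 2 then [] else [1, n]) *v wvertex n \<sigma> p q ((j+1) mod (2*n-2)))"
proof -
  define T B W where "T = map (shift n) (wword n j)" and "B = (if j \<le> n - 2 then [] else [1, n])"
    and "W = wword n ((j+1) mod (2*n-2))"
  have r: "1 \<in> {1..n}" "n \<in> {1..n}" using n4 by auto
  have wT: "even_word n T"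
    unfolding T_def using n4 j by (simp add: even_word_map_shift even_word_wword)
  have wB: "even_word n B" unfolding B_def using r by (simp add: even_word_Nil even_word_pair)
  have wW: "even_word n W" unfolding W_def using n4 by (simp add: even_word_wword)
  have w1n: "even_word n [1, n]" using r by (simp add: even_word_pair)
  have S: "hn_eq n (if even j then T @ [1, n] else T) (B @ W)"
    using hn_eq_wword_shift[OF n4 ev j] unfolding T_def B_def W_def .
  have "proj_eq (\<sigma> T *v (if even j then \<sigma> [1, n] *v q else p))
      (\<sigma> (B @ W) *v (if even j then q else p))"
  proof (cases "even j")
    case True
    have "proj_eq (\<sigma> T *v (\<sigma> [1, n] *v q)) (\<sigma> (T @ [1, n]) *v q)"
      by (rule proj_eq_sym[OF hom_Gn_append[OF hom wT w1n]])
    also have "proj_eq \<dots> (\<sigma> (B @ W) *v q)"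
      using hom_Gn_hn_eq[OF hom even_word_append[OF wT w1n] even_word_append[OF wB wW]] S True
        by simp
    finally show ?thesis using True by simp
  next
    case False
    then show ?thesis using hom_Gn_hn_eq[OF hom wT even_word_append[OF wB wW]] S by simp
  qed
  also have "proj_eq \<dots> (\<sigma> B *v (\<sigma> W *v (if even j then q else p)))"
    by (rule hom_Gn_append[OF hom wB wW])
  finally have "proj_eq (\<sigma> T *v (if even j then \<sigma> [1, n] *v q else p))
      (\<sigma> B *v (\<sigma> W *v (if even j then q else p)))" .
  moreover have "wvertex n \<sigma> p q ((j+1) mod (2*n-2)) = \<sigma> W *v (if even j then q else p)"
    using even_mod_Suc[of "2*n-2" j] n4 j by (simp add: wvertex_def W_def)
  moreover have "wvertex n (\<lambda>u. \<sigma> (map (shift n) u)) (\<sigma> [1, n] *v q) p j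
      = \<sigma> T *v (if even j then \<sigma> [1, n] *v q else p)"
    by (simp add: wvertex_def T_def)
  ultimately show ?thesis unfolding B_def[symmetric] by (simp only:)
qed

locale shift_step =
  fixes n :: nat and H :: "complex^2^2" and \<sigma> :: "nat list \<Rightarrow> complex^2^2" and f :: "complex^2"
  assumes H: "hermitian_sig11 H" and hom: "hom_Gn n H \<sigma>" and n4: "n \<ge> 4" and ev: "even n"
    and f: "f \<in> cdisc H"
begin

abbreviation "N \<equiv> 2*n - 2"
abbreviation "A \<equiv> \<sigma> [1, n]"
abbreviation "d \<equiv> \<sigma> [n, 1] *v f"
abbreviation "X \<equiv> wvertex n \<sigma> f f"
abbreviation "Y \<equiv> wvertex n (\<lambda>u. \<sigma> (map (shift n) u)) (A *v f) f"

lemma in_range: "1 \<in> {1..n}" "n \<in> {1..n}"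
  using n4 by auto

lemma A_unitary: "unitary_H H A"
  using hom_Gn_unitary[OF hom even_word_pair[OF in_range]] .

lemma d_cdisc: "d \<in> cdisc H"
  using unitary_cdisc[OF H hom_Gn_unitary[OF hom even_word_pair[OF in_range(2,1)]] f] .

lemma X_cdisc: "t < N \<Longrightarrow> X t \<in> cdisc H"
  using wvertex_cdisc[OF H hom _ f f] n4 by simp

lemma proj_eq_word: "even_word n u \<Longrightarrow> even_word n v \<Longrightarrow> hn_eq n u v \<Longrightarrow> proj_eq (\<sigma> u *v f) (\<sigma> v *v f)"
  by (rule hom_Gn_hn_eq[OF hom])

lemma X_0: "proj_eq (X 0) f"
  using hom_Gn_Nil[OF hom] by (simp add: wvertex_def wword_low wbase_even vword_0)

lemma X_1: "X 1 = A *v f"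
  using n4 by (simp add: wvertex_def wword_low wbase_odd vword_def)

lemma X_pred_n: "proj_eq (X (n-1)) f"
proof -
  have "wword n (n-1) = [n, n]" using n4 by (simp add: wword_high wbase_even vword_0)
  moreover have "proj_eq (\<sigma> [n, n] *v f) (\<sigma> [] *v f)"
    using proj_eq_word[OF even_word_pair[OF in_range(2,2)] even_word_Nil]
      hn_eq_cancel_pair[OF in_range(2), of "[]" "[]"] by simp
  ultimately show ?thesis using proj_eq_trans hom_Gn_Nil[OF hom] by (simp add: wvertex_def)
qed

lemma X_n: "proj_eq (X n) d"
proof -
  have "wword n n = [n, 1] @ [n, n]" using n4 by (simp add: wword_high wbase_odd vword_def)
  moreover have "hn_eq n ([n, 1] @ [n, n]) [n, 1]"
    using hn_eq_cancel_pair[OF in_range(2), of "[n, 1]" "[]"] by simp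
  ultimately show ?thesis
    using proj_eq_word[of "[n, 1] @ [n, n]" "[n, 1]"] in_range
    by (simp add: wvertex_def even_word_def valid_word_def)
qed

lemma f_proj_eq_A_d: "proj_eq f (A *v d)"
proof -
  have w: "even_word n [1, n]" "even_word n [n, 1]" using in_range by (simp_all add: even_word_pair)
  have "hn_eq n ([1] @ n # n # [1]) ([] @ 1 # 1 # [])"
    using hn_eq_cancel_pair[OF in_range(2), of "[1]" "[1]"] by simp
  also have "hn_eq n ([] @ 1 # 1 # []) []"
    using hn_eq_cancel_pair[OF in_range(1), of "[]" "[]"] by simp
  finally have "proj_eq (\<sigma> ([1, n] @ [n, 1]) *v f) (\<sigma> [] *v f)"
    using proj_eq_word even_word_append[OF w] even_word_Nil by simp
  then have "proj_eq (A *v d) (\<sigma> [] *v f)"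
    using proj_eq_trans[OF proj_eq_sym[OF hom_Gn_append[OF hom w]]] by blast
  also have "proj_eq \<dots> f" by (rule hom_Gn_Nil[OF hom])
  finally show ?thesis by (rule proj_eq_sym)
qed

lemma Y_proj_eq_first_half:
  assumes "j \<le> n - 2"
  shows "proj_eq (Y j) (X (j+1))"
proof -
  have j: "j < N" and "(j+1) mod N = j+1" using assms n4 by simp_all
  then show ?thesis
    using wvertex_map_shift[OF hom n4 ev j, of f f] hom_Gn_Nil[OF hom] proj_eq_trans assms by auto
qed

lemma Y_proj_eq_second_half:
  assumes "n - 1 \<le> j" "j < N"
  shows "proj_eq (Y j) (A *v X ((j+1) mod N))"
proof -
  have "\<not> j \<le> n - 2" using assms n4 by linarith
  then show ?thesis using wvertex_map_shift[OF hom n4 ev assms(2), of f f] by simp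
qed

lemma area_Y_first_half:
  assumes "j + 3 \<le> n"
  shows "area_arg H f (Y j) (Y (j+1)) = area_arg H f (X (j+1)) (X (j+2))"
proof -
  have "j \<le> n - 2" "j + 1 \<le> n - 2" using assms by linarith+
  then have "proj_eq (Y j) (X (j+1))" "proj_eq (Y (j+1)) (X (j+1+1))"
    using Y_proj_eq_first_half by blast+
  then show ?thesis by (simp add: area_arg_proj_eq[OF proj_eq_refl])
qed

lemma area_Y_middle: "area_arg H f (Y (n-2)) (Y (n-1)) = area_arg H f (X (n-1)) (X n)"
proof -
  have "proj_eq (Y (n-2)) (X (n-2+1))" by (rule Y_proj_eq_first_half) simp
  moreover have "n - 2 + 1 = n - 1" using n4 by simp
  ultimately have "proj_eq (Y (n-2)) (X (n-1))" by simp
  then have y1: "proj_eq (Y (n-2)) f" using X_pred_n by (rule proj_eq_trans)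
  have "(n - 1 + 1) mod N = n" using n4 by simp
  then have "proj_eq (Y (n-1)) (A *v X n)" using Y_proj_eq_second_half[of "n-1"] n4 by simp
  also have "proj_eq \<dots> (A *v d)" by (rule proj_eq_matrix_vector_mult[OF X_n])
  also have "proj_eq \<dots> f" by (rule proj_eq_sym[OF f_proj_eq_A_d])
  finally have y2: "proj_eq (Y (n-1)) f" .
  show ?thesis
    using area_arg_proj_eq[OF proj_eq_refl y1 y2]
      area_arg_proj_eq[OF proj_eq_refl X_pred_n proj_eq_refl]
      area_arg_repeat_left[OF H f] by simp
qed

text \<open>On the second half the polygon \<open>Y\<close> is the image of \<open>X\<close> under \<open>A\<close>, which maps \<open>d\<close> to \<open>f\<close>,
  so its triangles are those of \<open>X\<close> seen from \<open>d\<close> instead of \<open>f\<close>.\<close>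

lemma area_Y_second_half:
  assumes "n - 1 \<le> j" "j < 2*n-3"
  shows "area_arg H f (Y j) (Y (j+1)) = area_arg H f (X (j+1)) (X ((j+2) mod N))
    + (area_arg H f d (X (j+1)) - area_arg H f d (X ((j+2) mod N)))"
proof -
  have "j + 1 < N" using assms by linarith
  then have "(j+1) mod N = j+1" "(j+1+1) mod N = (j+2) mod N" by simp_all
  then have "proj_eq (Y j) (A *v X (j+1))" "proj_eq (Y (j+1)) (A *v X ((j+2) mod N))"
    using Y_proj_eq_second_half[of j] Y_proj_eq_second_half[of "j+1"] assms \<open>j + 1 < N\<close> by simp_all
  then have "area_arg H f (Y j) (Y (j+1)) = area_arg H d (X (j+1)) (X ((j+2) mod N))"
    by (rule area_arg_proj_eq_unitary[OF A_unitary f_proj_eq_A_d])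
  moreover have "area_arg H d (X (j+1)) (X ((j+2) mod N)) - area_arg H f (X (j+1)) (X ((j+2) mod N))
      + area_arg H f d (X ((j+2) mod N)) - area_arg H f d (X (j+1)) = 0"
    using area_arg_cocycle[OF H f d_cdisc X_cdisc[of "j+1"] X_cdisc[of "(j+2) mod N"]] \<open>j + 1 < N\<close>
    by simp
  ultimately show ?thesis by simp
qed

lemma area_Y_last: "area_arg H f (Y (2*n-3)) (Y 0) = area_arg H f (X 0) (X 1)"
proof -
  have "2*n-3+1 = N" using n4 by simp
  then have "(2*n-3+1) mod N = 0" by simp
  then have "proj_eq (Y (2*n-3)) (A *v X 0)" using Y_proj_eq_second_half[of "2*n-3"] n4 by simp
  then have y1: "proj_eq (Y (2*n-3)) (A *v f)"
    using proj_eq_trans proj_eq_matrix_vector_mult[OF X_0] by blast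
  have y2: "proj_eq (Y 0) (A *v f)" using Y_proj_eq_first_half[of 0] X_1 by simp
  have "area_arg H f (Y (2*n-3)) (Y 0) = 0"
    using area_arg_proj_eq[OF proj_eq_refl y1 y2]
      area_arg_repeat_right[OF H unitary_cdisc[OF H A_unitary f]]
    by simp
  moreover have "area_arg H f (X 0) (X 1) = 0"
    using area_arg_proj_eq[OF proj_eq_refl X_0 proj_eq_refl] area_arg_repeat_left[OF H f] by simp
  ultimately show ?thesis by simp
qed

definition boundary :: "nat \<Rightarrow> real" where
  "boundary j = area_arg H f d (X ((j+1) mod N))"

lemma area_Y_edge:
  assumes j: "j < N"
  shows "area_arg H f (Y j) (Y ((j+1) mod N))
    = area_arg H f (X ((j+1) mod N)) (X (((j+1) mod N + 1) mod N))
      + (if n - 1 \<le> j \<and> j < 2*n-3 then boundary j - boundary (Suc j) else 0)"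
proof -
  consider (first) "j + 3 \<le> n" | (middle) "j = n - 2" | (second) "n - 1 \<le> j" "j < 2*n-3"
    | (last) "j = 2*n-3"
    using j n4 by linarith
  then show ?thesis
  proof cases
    case first
    then have "j + 2 < N" "\<not> n - 1 \<le> j" using n4 by linarith+
    then show ?thesis using area_Y_first_half[OF first] by simp
  next
    case middle
    then have "(j+1) mod N = n - 1" "(n - 1 + 1) mod N = n" "j + 1 = n - 1" "\<not> n - 1 \<le> j"
      using n4 by simp_all
    then show ?thesis using area_Y_middle middle by simp
  next
    case second
    then have "j + 1 < N" by linarith
    then show ?thesis using area_Y_second_half[OF second] second by (simp add: boundary_def)
  next
    case last
    then have "j + 1 = N" "\<not> j < 2*n-3" using n4 by simp_all
    moreover have "(0 + 1) mod N = 1" using n4 by simp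
    ultimately show ?thesis using area_Y_last last by simp
  qed
qed

lemma sum_boundary_telescope:
  "(\<Sum>j<N. if n - 1 \<le> j \<and> j < 2*n-3 then boundary j - boundary (Suc j) else 0) = 0"
proof -
  have "(\<Sum>j<N. if n - 1 \<le> j \<and> j < 2*n-3 then boundary j - boundary (Suc j) else 0)
      = (\<Sum>j\<in>{j \<in> {..<N}. n - 1 \<le> j \<and> j < 2*n-3}. boundary j - boundary (Suc j))"
    by (rule sum.inter_filter[OF finite_lessThan, symmetric])
  also have "{j \<in> {..<N}. n - 1 \<le> j \<and> j < 2*n-3} = {n-1..<2*n-3}" using n4 by auto
  also have "(\<Sum>j = n-1..<2*n-3. boundary j - boundary (Suc j)) = boundary (n-1) - boundary (2*n-3)"
  proof -
    have "n - 1 \<le> 2*n-3" using n4 by simp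
    from sum_Suc_diff'[OF this, of boundary] show ?thesis unfolding sum_subtractf by linarith
  qed
  also have "boundary (n-1) = area_arg H f d d"
    using n4 area_arg_proj_eq[OF proj_eq_refl proj_eq_refl X_n] by (simp add: boundary_def)
  also have "boundary (2*n-3) = area_arg H f d f"
  proof -
    have "2*n-3+1 = N" using n4 by simp
    then show ?thesis
      using area_arg_proj_eq[OF proj_eq_refl proj_eq_refl X_0] by (simp add: boundary_def)
  qed
  finally show ?thesis
    using area_arg_repeat_right[OF H d_cdisc] area_arg_repeat_outer[OF H f] by simp
qed

lemma polygon_area_Y: "polygon_area H f Y N = polygon_area H f X N"
proof -
  have N: "N > 0" using n4 by simp
  have "polygon_area H f Y N
      = (\<Sum>j<N. area_arg H f (X ((j+1) mod N)) (X (((j+1) mod N + 1) mod N)))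
        + (\<Sum>j<N. if n - 1 \<le> j \<and> j < 2*n-3 then boundary j - boundary (Suc j) else 0)"
    unfolding polygon_area_def sum.distrib[symmetric]
      by (rule sum.cong[OF HOL.refl], rule area_Y_edge) simp
  also have "(\<Sum>j<N. area_arg H f (X ((j+1) mod N)) (X (((j+1) mod N + 1) mod N)))
      = polygon_area H f X N"
    unfolding polygon_area_def by (rule sum_lessThan_rotate1[OF N])
  finally show ?thesis using sum_boundary_telescope by simp
qed

end

lemma Area_n_map_shift_base_points:
  assumes H: "hermitian_sig11 H" and hom: "hom_Gn n H \<sigma>" and n4: "n \<ge> 4" and ev: "even n"
    and f: "f \<in> cdisc H"
  shows "Area_n n H (\<sigma> [1, n] *v f) f (\<lambda>u. \<sigma> (map (shift n) u)) = Area_n n H f f \<sigma>"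
proof -
  interpret shift_step n H \<sigma> f by unfold_locales (fact H hom n4 ev f)+
  have n2: "n \<ge> 2" using n4 by simp
  have "Area_n n H (A *v f) f (\<lambda>u. \<sigma> (map (shift n) u)) = polygon_area H f Y N"
    using Area_n_eq_polygon_area[OF H hom_Gn_map_shift[OF hom] n2
        unitary_cdisc[OF H A_unitary f] f f]
      n4 by simp
  also have "\<dots> = polygon_area H f X N" by (rule polygon_area_Y)
  also have "\<dots> = Area_n n H f f \<sigma>" using Area_n_eq_polygon_area[OF H hom n2 f f f] by simp
  finally show ?thesis .
qed

lemma Area_n_map_shift:
  assumes H: "hermitian_sig11 H" and hom: "hom_Gn n H \<sigma>" and n4: "n \<ge> 4" and ev: "even n"
    and p: "p \<in> cdisc H" and q: "q \<in> cdisc H"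
  shows "Area_n n H p q (\<lambda>u. \<sigma> (map (shift n) u)) = Area_n n H p q \<sigma>"
proof -
  have n1: "n \<ge> 1" using n4 by simp
  have hom': "hom_Gn n H (\<lambda>u. \<sigma> (map (shift n) u))" by (rule hom_Gn_map_shift[OF hom n1])
  have "1 \<in> {1..n}" "n \<in> {1..n}" using n1 by auto
  then have "\<sigma> [1, n] *v p \<in> cdisc H"
    using unitary_cdisc[OF H hom_Gn_unitary[OF hom even_word_pair] p] by simp
  then have "Area_n n H p q (\<lambda>u. \<sigma> (map (shift n) u))
      = Area_n n H (\<sigma> [1, n] *v p) p (\<lambda>u. \<sigma> (map (shift n) u))"
    using p by (rule Area_n_base_points_independent[OF H hom' n4 ev p q])
  also have "\<dots> = Area_n n H p p \<sigma>" by (rule Area_n_map_shift_base_points[OF H hom n4 ev p])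
  also have "\<dots> = Area_n n H p q \<sigma>" by (rule Area_n_base_points_independent[OF H hom n4 ev p p p q])
  finally show ?thesis .
qed

lemma hom_Gn_map_shift_power:
  assumes hom: "hom_Gn n H \<rho>" and n: "n \<ge> 1"
  shows "hom_Gn n H (\<lambda>u. \<rho> (map (shift n ^^ i) u))"
proof (induction i)
  case 0
  then show ?case using hom by (simp add: id_def)
next
  case (Suc i)
  have e: "(\<lambda>u. \<rho> (map (shift n ^^ Suc i) u)) = (\<lambda>u. \<rho> (map (shift n ^^ i) (map (shift n) u)))"
    by (simp add: funpow_Suc_right del: funpow.simps)
  show ?case unfolding e by (rule hom_Gn_map_shift[OF Suc n])
qed

lemma Area_n_map_shift_power:
  assumes H: "hermitian_sig11 H" and hom: "hom_Gn n H \<rho>" and n4: "n \<ge> 4" and ev: "even n"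
    and p: "p \<in> cdisc H" and q: "q \<in> cdisc H"
  shows "Area_n n H p q (\<lambda>u. \<rho> (map (shift n ^^ i) u)) = Area_n n H p q \<rho>"
proof (induction i)
  case 0
  then show ?case by (simp add: id_def)
next
  case (Suc i)
  have hom_i: "hom_Gn n H (\<lambda>u. \<rho> (map (shift n ^^ i) u))"
    using hom_Gn_map_shift_power[OF hom] n4 by simp
  have e: "(\<lambda>u. \<rho> (map (shift n ^^ Suc i) u)) = (\<lambda>u. \<rho> (map (shift n ^^ i) (map (shift n) u)))"
    by (simp add: funpow_Suc_right del: funpow.simps)
  show ?case unfolding e by (rule HOL.trans[OF Area_n_map_shift[OF H hom_i n4 ev p q] Suc.IH])
qed

theorem corollary5p8:
  fixes n :: nat and H :: "complex^2^2" and \<rho> :: "nat list \<Rightarrow> complex^2^2"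
  assumes "n \<ge> 6" and "even n"
    and "hermitian_sig11 H"
    and "hom_Gn n H \<rho>"
  shows "\<forall>p q p' q' i j. p \<in> cdisc H \<and> q \<in> cdisc H \<and> p' \<in> cdisc H \<and> q' \<in> cdisc H
           \<and> i \<in> {1..n} \<and> j \<in> {1..n} \<longrightarrow>
           Area_i n i H p q \<rho> = Area_i n j H p' q' \<rho>"
proof (intro allI impI)
  fix p q p' q' i j
  assume a: "p \<in> cdisc H \<and> q \<in> cdisc H \<and> p' \<in> cdisc H \<and> q' \<in> cdisc H \<and> i \<in> {1..n} \<and> j \<in> {1..n}"
  have n4: "n \<ge> 4" using assms(1) by simp
  note shift_power = Area_n_map_shift_power[OF assms(3,4) n4 assms(2)]
  have "Area_i n i H p q \<rho> = Area_n n H p q \<rho>"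
    unfolding Area_i_def using shift_power a by blast
  also have "\<dots> = Area_n n H p' q' \<rho>"
    using Area_n_base_points_independent[OF assms(3,4) n4 assms(2)] a by blast
  also have "\<dots> = Area_i n j H p' q' \<rho>"
    unfolding Area_i_def using shift_power a by simp
  finally show "Area_i n i H p q \<rho> = Area_i n j H p' q' \<rho>" .
qed

end
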